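(* Let $n:\mathbb{R}\to(0,\infty)$ be an $\ell$-periodic index of refraction and consider the equation $-\frac{1}{n^2(x)}\psi''(x)=\nu^2\psi(x)$. Let $\mathbf M(\nu)$ be its transfer matrix over one period, and let $\nu_0$ be a non-degenerate band edge. For $\nu$ in a neighborhood of $\nu_0$, let $e^{\pm i\omega}$ be the eigenvalues of $\mathbf M(\nu)$, where $\omega=\omega(\nu)$ is determined by $\cos\omega=\frac12\operatorname{tr}\mathbf M(\nu)$ and $\omega(\nu_0)=0$. Then there exists an analytic matrix-valued function $\mathbf D=\mathbf D(\omega)$ with $\det\mathbf D\neq 0$ such that, for $\nu$ in this neighborhood, $$\mathbf D^{-1}\mathbf M(\nu)\mathbf D=\begin{bmatrix}\cos\omega & \dfrac{\sin\omega}{\omega}\\[2mm] -\omega\sin\omega & \cos\omega\end{bmatrix}.$$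
   Context: The transfer matrix $\mathbf M(\nu)$ is the $2\times2$ matrix mapping $(\psi(0),\psi'(0))^T$ to $(\psi(\ell),\psi'(\ell))^T$ for solutions $\psi$ of the equation; it is analytic in $\nu$ and $\det\mathbf M=1$. The bands of the spectrum are the sets where $|\operatorname{tr}\mathbf M(\nu)|\le 2$; a band edge is a point $\nu_0$ with $|\operatorname{tr}\mathbf M(\nu_0)|=2$ at the boundary of a band, and it is called non-degenerate if $\frac{d}{d\nu}\operatorname{tr}\mathbf M(\nu)\neq0$ at $\nu=\nu_0$. At $\omega=0$ the right-hand side is understood with $\frac{\sin\omega}{\omega}=1$. *)

theory Defs
  imports "HOL-Analysis.Analysis"
begin

definition vec2 :: "'a \<Rightarrow> 'a \<Rightarrow> 'a^2" where
  "vec2 a b = (\<chi> i. if i = 1 then a else b)"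

definition cmat :: "real^2^2 \<Rightarrow> complex^2^2" where
  "cmat A = (\<chi> i j. complex_of_real (A $ i $ j))"

text \<open>A (Caratheodory) solution on one period [0,l] of
  - psi''(x) / n(x)^2 = nu^2 psi(x), i.e. psi'' = - nu^2 n^2 psi, with derivative dpsi:
  psi is differentiable with derivative dpsi, and dpsi is the primitive
  of - nu^2 n^2 psi (this also covers discontinuous, e.g. layered, n).\<close>
definition is_solution ::
  "(real \<Rightarrow> real) \<Rightarrow> real \<Rightarrow> real \<Rightarrow> (real \<Rightarrow> real) \<Rightarrow> (real \<Rightarrow> real) \<Rightarrow> bool" where
  "is_solution n l \<nu> \<psi> d\<psi> \<longleftrightarrow>
     (\<forall>x\<in>{0..l}. (\<psi> has_real_derivative d\<psi> x) (at x within {0..l})) \<and>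
     (\<forall>x\<in>{0..l}. ((\<lambda>t. - (\<nu>\<^sup>2 * (n t)\<^sup>2 * \<psi> t)) has_integral (d\<psi> x - d\<psi> 0)) {0..x})"

definition is_transfer_matrix ::
  "(real \<Rightarrow> real) \<Rightarrow> real \<Rightarrow> real \<Rightarrow> real^2^2 \<Rightarrow> bool" where
  "is_transfer_matrix n l \<nu> M \<longleftrightarrow>
     (\<forall>\<psi> d\<psi>. is_solution n l \<nu> \<psi> d\<psi> \<longrightarrow> vec2 (\<psi> l) (d\<psi> l) = M *v vec2 (\<psi> 0) (d\<psi> 0))"

definition bands :: "(real \<Rightarrow> real^2^2) \<Rightarrow> real set" where
  "bands M = {\<nu>. \<bar>trace (M \<nu>)\<bar> \<le> 2}"

definition band_edge :: "(real \<Rightarrow> real^2^2) \<Rightarrow> real \<Rightarrow> bool" where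
  "band_edge M \<nu>0 \<longleftrightarrow> \<bar>trace (M \<nu>0)\<bar> = 2 \<and> \<nu>0 \<in> frontier (bands M)"

definition nondegenerate_band_edge :: "(real \<Rightarrow> real^2^2) \<Rightarrow> real \<Rightarrow> bool" where
  "nondegenerate_band_edge M \<nu>0 \<longleftrightarrow> band_edge M \<nu>0 \<and>
     (\<exists>d. ((\<lambda>\<nu>. trace (M \<nu>)) has_real_derivative d) (at \<nu>0) \<and> d \<noteq> 0)"

definition sinc :: "complex \<Rightarrow> complex" where
  "sinc w = (if w = 0 then 1 else sin w / w)"

definition normal_form :: "complex \<Rightarrow> complex^2^2" where
  "normal_form w = (\<chi> i j. if i = 1 then (if j = 1 then cos w else sinc w)
                            else (if j = 1 then - w * sin w else cos w))"

end

theory Submission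
  imports Defs "HOL-Complex_Analysis.Conformal_Mappings"
begin

text \<open>Write \<open>\<lambda> = \<nu>\<^sup>2\<close> and \<open>q = n\<^sup>2\<close>. The solutions of \<open>\<psi>'' = -\<lambda> q \<psi>\<close> are power series in \<open>\<lambda>\<close>
  whose coefficients decay like \<open>C\<^sup>k/k!\<close>, so the entries of the transfer matrix are entire functions
  of \<open>\<lambda>\<close>, and the constancy of the Wronskian gives \<open>det M = 1\<close>. At a non-degenerate band edge
  the trace \<open>\<tau>(\<lambda>)\<close> has non-zero derivative, so \<open>\<lambda> = \<tau>\<^sup>-\<^sup>1(2 cos \<omega>)\<close> and with it the transfer
  matrix depend analytically on \<open>\<omega>\<close> near \<open>0\<close>. Moreover \<open>M(\<nu>\<^sub>0) \<noteq> I\<close>, since otherwise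
  \<open>tr M - 2 = bc - (a - 1)(d - 1)\<close> would be stationary at \<open>\<nu>\<^sub>0\<close>. A matrix of trace \<open>2 cos \<omega>\<close> and
  determinant \<open>1\<close> is conjugated to the normal form by the matrix with columns \<open>(M - cos \<omega>) v\<close> and
  \<open>(sin \<omega> / \<omega>) v\<close>, and \<open>M(\<nu>\<^sub>0) \<noteq> I\<close> allows a fixed \<open>v\<close> making this conjugator invertible near
  \<open>\<omega> = 0\<close>.\<close>

text \<open>Formal power series and vectors share the index notation \<open>$\<close>; the former is switched off
  to keep the (exponentially slow) disambiguation out of the matrix formulas.\<close>

unbundle no Formal_Power_Series.fps_syntax

section \<open>Elementary analysis\<close>

lemma locally_small_increments_imp_le:
  fixes g F :: "real \<Rightarrow> real"
  assumes ax: "a \<le> x"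
    and small: "\<And>e. e > 0 \<Longrightarrow> \<exists>d>0. \<forall>z y. a \<le> z \<longrightarrow> z \<le> y \<longrightarrow> y \<le> x \<longrightarrow> y - z < d
                  \<longrightarrow> g y - g z \<le> e * (F y - F z)"
  shows "g x \<le> g a"
proof -
  have chained: "g x - g a \<le> e * (F x - F a)" if e: "e > 0" for e
  proof -
    obtain d where d: "d > 0" and dH: "\<forall>z y. a \<le> z \<longrightarrow> z \<le> y \<longrightarrow> y \<le> x \<longrightarrow> y - z < d
               \<longrightarrow> g y - g z \<le> e * (F y - F z)"
      using small[OF e] by blast
    have "\<forall>y. a \<le> y \<and> y \<le> x \<and> y \<le> a + real m * (d/2) \<longrightarrow> g y - g a \<le> e * (F y - F a)" for m
    proof (induction m)
      case (Suc m)
      show ?case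
      proof (intro allI impI)
        fix y assume y: "a \<le> y \<and> y \<le> x \<and> y \<le> a + real (Suc m) * (d / 2)"
        define z where "z = max a (y - d/2)"
        have z: "a \<le> z" "z \<le> y" "y - z < d" "z \<le> a + real m * (d/2)"
          using y d unfolding z_def by (auto simp: max_def field_simps)
        have "g z - g a \<le> e * (F z - F a)" using Suc.IH z y by auto
        moreover have "g y - g z \<le> e * (F y - F z)" using dH z y by auto
        ultimately show "g y - g a \<le> e * (F y - F a)" by (simp add: algebra_simps)
      qed
    qed auto
    moreover obtain m where "(x - a) / (d/2) \<le> real m" using real_arch_simple by blast
    then have "x \<le> a + real m * (d/2)" using d by (simp add: field_simps)
    ultimately show ?thesis using ax by auto
  qed
  show ?thesis
  proof (rule ccontr)
    assume "\<not> g x \<le> g a"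
    then have pos: "g x - g a > 0" by simp
    show False
    proof (cases "F x - F a \<le> 0")
      case True
      then show ?thesis using chained[of 1] pos by simp
    next
      case False
      define e where "e = (g x - g a) / (2 * (F x - F a))"
      have "e > 0" using pos False by (simp add: e_def)
      moreover have "e * (F x - F a) = (g x - g a) / 2" using False by (simp add: e_def field_simps)
      ultimately have "g x - g a \<le> (g x - g a) / 2" using chained by metis
      then show False using pos by simp
    qed
  qed
qed

lemma locally_small_increments_imp_eq:
  fixes g F :: "real \<Rightarrow> real"
  assumes ax: "a \<le> x"
    and small: "\<And>e. e > 0 \<Longrightarrow> \<exists>d>0. \<forall>z y. a \<le> z \<longrightarrow> z \<le> y \<longrightarrow> y \<le> x \<longrightarrow> y - z < d
                  \<longrightarrow> \<bar>g y - g z\<bar> \<le> e * (F y - F z)"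
  shows "g x = g a"
proof -
  have "h x \<le> h a" if h: "\<And>y z. h y - h z \<le> \<bar>g y - g z\<bar>" for h
  proof (rule locally_small_increments_imp_le[OF ax])
    fix e :: real assume "e > 0"
    then obtain d where "d > 0" and d: "\<forall>z y. a \<le> z \<longrightarrow> z \<le> y \<longrightarrow> y \<le> x \<longrightarrow> y - z < d
               \<longrightarrow> \<bar>g y - g z\<bar> \<le> e * (F y - F z)" using small by blast
    then show "\<exists>d>0. \<forall>z y. a \<le> z \<longrightarrow> z \<le> y \<longrightarrow> y \<le> x \<longrightarrow> y - z < d
               \<longrightarrow> h y - h z \<le> e * (F y - F z)"
      using h order_trans by blast
  qed
  note le = this
  have "g x \<le> g a" by (rule le) simp
  moreover have "- g x \<le> - g a" by (rule le[of "\<lambda>t. - g t"]) (simp add: abs_le_iff)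
  ultimately show ?thesis by simp
qed

lemma power_mult_diff_le:
  fixes a b :: real
  assumes "0 \<le> a" "a \<le> b"
  shows "a ^ j * (b - a) \<le> (b ^ Suc j - a ^ Suc j) / real (Suc j)"
proof -
  have "(\<Sum>i<Suc j. a ^ j) \<le> (\<Sum>i<Suc j. a ^ (Suc j - Suc i) * b ^ i)"
  proof (rule sum_mono)
    fix i assume "i \<in> {..<Suc j}"
    then have "a ^ j = a ^ (j - i) * a ^ i" by (simp add: power_add[symmetric])
    also have "\<dots> \<le> a ^ (j - i) * b ^ i"
      using assms by (intro mult_left_mono power_mono) auto
    finally show "a ^ j \<le> a ^ (Suc j - Suc i) * b ^ i" by simp
  qed
  then have "(b - a) * (real (Suc j) * a ^ j) \<le> b ^ Suc j - a ^ Suc j"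
    unfolding power_diff_sumr2[of b _ a] using assms by (intro mult_left_mono) auto
  then show ?thesis by (simp add: field_simps)
qed

lemma integral_suminf_dominated:
  fixes f :: "nat \<Rightarrow> real \<Rightarrow> real"
  assumes f_int: "\<And>k. f k integrable_on S" and h_int: "h integrable_on S"
    and h_nonneg: "\<And>t. t \<in> S \<Longrightarrow> 0 \<le> h t"
    and B_nonneg: "\<And>k. 0 \<le> B k" and B_summable: "summable B"
    and dominated: "\<And>k t. t \<in> S \<Longrightarrow> \<bar>f k t\<bar> \<le> h t * B k"
  shows "(\<lambda>t. \<Sum>k. f k t) integrable_on S"
    and "(\<lambda>k. integral S (f k)) sums integral S (\<lambda>t. \<Sum>k. f k t)"
proof -
  define P where "P N t = (\<Sum>k<N. f k t)" for N t
  have P_int: "P N integrable_on S" for N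
    unfolding P_def by (intro integrable_sum) (auto simp: f_int)
  have P_bound: "norm (P N t) \<le> h t * suminf B" if t: "t \<in> S" for N t
  proof -
    have "norm (P N t) \<le> (\<Sum>k<N. \<bar>f k t\<bar>)"
      unfolding P_def using sum_abs by simp
    also have "\<dots> \<le> (\<Sum>k<N. h t * B k)"
      using dominated[OF t] by (intro sum_mono) auto
    also have "\<dots> \<le> h t * suminf B"
      unfolding sum_distrib_left[symmetric]
      using h_nonneg[OF t] B_nonneg B_summable by (intro mult_left_mono sum_le_suminf) auto
    finally show ?thesis .
  qed
  have "(\<lambda>N. P N t) \<longlonglongrightarrow> (\<Sum>k. f k t)" if t: "t \<in> S" for t
    unfolding P_def
    by (rule summable_LIMSEQ, rule summable_comparison_test[OF _ summable_mult[OF B_summable, of "h t"]])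
      (use dominated[OF t] in auto)
  note limit = dominated_convergence[OF P_int integrable_on_mult_left[OF h_int] P_bound this]
  show "(\<lambda>t. \<Sum>k. f k t) integrable_on S" using limit(1) .
  have "integral S (P N) = (\<Sum>k<N. integral S (f k))" for N
    unfolding P_def by (intro integral_sum) (auto simp: f_int)
  then show "(\<lambda>k. integral S (f k)) sums integral S (\<lambda>t. \<Sum>k. f k t)"
    using limit(2) by (simp add: sums_def)
qed

lemma power_series_entire:
  assumes "\<And>z. (\<lambda>k. c k * z ^ k) sums f z"
  shows "f holomorphic_on UNIV"
  unfolding holomorphic_on_def
proof
  fix z :: complex
  have "f analytic_on ball 0 (norm z + 1)"
    by (rule power_series_analytic) (use assms in simp)
  then have "f field_differentiable (at z)"
    by (rule holomorphic_on_imp_differentiable_at[OF analytic_imp_holomorphic]) auto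
  then show "f field_differentiable (at z within UNIV)" by simp
qed

section \<open>Power series solutions of Hill's equation\<close>

text \<open>With \<open>\<lambda> = \<nu>\<^sup>2\<close> and \<open>q = n\<^sup>2\<close>, the solution of \<open>\<psi>'' = -\<lambda> q \<psi>\<close>, \<open>\<psi>(0) = a\<close>, \<open>\<psi>'(0) = b\<close>
  is the power series \<open>\<Sum>\<^sub>k \<lambda>\<^sup>k u\<^sub>k\<close> with \<open>u\<^sub>0 = a + b x\<close> and \<open>u\<^sub>k\<^sub>+\<^sub>1'' = -q u\<^sub>k\<close>,
  \<open>u\<^sub>k\<^sub>+\<^sub>1(0) = u\<^sub>k\<^sub>+\<^sub>1'(0) = 0\<close>.\<close>

primrec psi_coeff :: "(real \<Rightarrow> real) \<Rightarrow> real \<Rightarrow> real \<Rightarrow> nat \<Rightarrow> real \<Rightarrow> real" where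
  "psi_coeff q a b 0 = (\<lambda>x. a + b * x)"
| "psi_coeff q a b (Suc k) =
     (\<lambda>x. integral {0..x} (\<lambda>s. - integral {0..s} (\<lambda>t. q t * psi_coeff q a b k t)))"

definition dpsi_coeff :: "(real \<Rightarrow> real) \<Rightarrow> real \<Rightarrow> real \<Rightarrow> nat \<Rightarrow> real \<Rightarrow> real" where
  "dpsi_coeff q a b k x =
     (if k = 0 then b else - integral {0..x} (\<lambda>t. q t * psi_coeff q a b (k - 1) t))"

definition psi :: "(real \<Rightarrow> real) \<Rightarrow> real \<Rightarrow> real \<Rightarrow> real \<Rightarrow> real \<Rightarrow> real" where
  "psi q a b lam x = (\<Sum>k. lam ^ k * psi_coeff q a b k x)"

definition dpsi :: "(real \<Rightarrow> real) \<Rightarrow> real \<Rightarrow> real \<Rightarrow> real \<Rightarrow> real \<Rightarrow> real" where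
  "dpsi q a b lam x = (\<Sum>k. lam ^ k * dpsi_coeff q a b k x)"

definition psi_entire :: "(real \<Rightarrow> real) \<Rightarrow> real \<Rightarrow> real \<Rightarrow> real \<Rightarrow> complex \<Rightarrow> complex" where
  "psi_entire q a b x z = (\<Sum>k. complex_of_real (psi_coeff q a b k x) * z ^ k)"

definition dpsi_entire :: "(real \<Rightarrow> real) \<Rightarrow> real \<Rightarrow> real \<Rightarrow> real \<Rightarrow> complex \<Rightarrow> complex" where
  "dpsi_entire q a b x z = (\<Sum>k. complex_of_real (dpsi_coeff q a b k x) * z ^ k)"

text \<open>\<open>control q\<close> has derivative \<open>1 + q\<close>; both \<open>dx\<close> and \<open>q dx\<close> are dominated by \<open>d(control q)\<close>,
  which yields the bound \<open>\<bar>u\<^sub>k\<bar> \<le> K control\<^sup>2\<^sup>k / (2k)!\<close>.\<close>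

definition control :: "(real \<Rightarrow> real) \<Rightarrow> real \<Rightarrow> real" where
  "control q x = 1 + x + integral {0..x} q"

lemma dpsi_coeff_0 [simp]: "dpsi_coeff q a b 0 x = b"
  by (simp add: dpsi_coeff_def)

lemma dpsi_coeff_Suc: "dpsi_coeff q a b (Suc k) x = - integral {0..x} (\<lambda>t. q t * psi_coeff q a b k t)"
  by (simp add: dpsi_coeff_def)

lemma psi_coeff_Suc_eq_integral: "psi_coeff q a b (Suc k) x = integral {0..x} (dpsi_coeff q a b (Suc k))"
  by (simp only: psi_coeff.simps dpsi_coeff_Suc[abs_def])

lemma psi_coeff_at_0: "psi_coeff q a b k 0 = (if k = 0 then a else 0)"
  by (cases k) auto

lemma dpsi_coeff_at_0: "dpsi_coeff q a b k 0 = (if k = 0 then b else 0)"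
  by (cases k) (auto simp: dpsi_coeff_Suc)

lemma psi_at_0: "psi q a b lam 0 = a"
proof -
  have "(\<lambda>k. lam ^ k * psi_coeff q a b k 0) = (\<lambda>k. if k = 0 then a else 0)"
    by (auto simp: psi_coeff_at_0)
  then show ?thesis unfolding psi_def using sums_single[of 0 "\<lambda>_. a"] sums_unique by metis
qed

lemma dpsi_at_0: "dpsi q a b lam 0 = b"
proof -
  have "(\<lambda>k. lam ^ k * dpsi_coeff q a b k 0) = (\<lambda>k. if k = 0 then b else 0)"
    by (auto simp: dpsi_coeff_at_0)
  then show ?thesis unfolding dpsi_def using sums_single[of 0 "\<lambda>_. b"] sums_unique by metis
qed

locale hill_equation =
  fixes q :: "real \<Rightarrow> real" and l :: real
  assumes l_pos: "0 < l" and q_nonneg: "\<And>x. 0 \<le> q x" and q_integrable: "q integrable_on {0..l}"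
begin

lemma integral_split_at:
  fixes f :: "real \<Rightarrow> real"
  assumes "f integrable_on {0..l}" "0 \<le> z" "z \<le> y" "y \<le> l"
  shows "integral {0..y} f = integral {0..z} f + integral {z..y} f"
proof -
  have "f integrable_on {0..y}"
    by (rule integrable_subinterval_real[OF assms(1)]) (use assms in auto)
  then show ?thesis
    using Henstock_Kurzweil_Integration.integral_combine[where a=0 and c=z and b=y and f=f] assms
    by simp
qed

lemma integrable_q_mult:
  assumes f: "continuous_on {0..l} f" and "0 \<le> c" "d \<le> l"
  shows "(\<lambda>t. q t * f t) integrable_on {c..d}"
proof -
  have "(\<lambda>t. f t * q t) absolutely_integrable_on {0..l}"
  proof (rule absolutely_integrable_bounded_measurable_product_real)
    show "f \<in> borel_measurable (lebesgue_on {0..l})"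
      using f by (intro continuous_imp_measurable_on_sets_lebesgue) auto
    show "bounded (f ` {0..l})"
      using f by (intro compact_imp_bounded compact_continuous_image) auto
    show "q absolutely_integrable_on {0..l}"
      using q_integrable q_nonneg by (intro nonnegative_absolutely_integrable_1) auto
  qed auto
  then have "(\<lambda>t. q t * f t) integrable_on {0..l}"
    by (simp add: absolutely_integrable_on_def mult.commute)
  then show ?thesis by (rule integrable_subinterval_real) (use assms in auto)
qed

lemma integrable_one_plus_q_mult:
  assumes f: "continuous_on {0..l} f" and "0 \<le> c" "d \<le> l"
  shows "(\<lambda>t. (1 + q t) * f t) integrable_on {c..d}"
proof -
  have "(\<lambda>t. f t + q t * f t) integrable_on {c..d}"
    using integrable_q_mult[OF assms] integrable_continuous_real[OF continuous_on_subset[OF f]] assms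
    by (intro integrable_add) auto
  then show ?thesis by (simp add: algebra_simps)
qed

lemma psi_coeff_continuous:
  "continuous_on {0..l} (psi_coeff q a b k) \<and> continuous_on {0..l} (dpsi_coeff q a b k)"
proof (induction k)
  case 0
  then show ?case by (auto intro!: continuous_intros simp: dpsi_coeff_def)
next
  case (Suc k)
  have "(\<lambda>t. q t * psi_coeff q a b k t) integrable_on {0..l}"
    using Suc integrable_q_mult[of _ 0 l] by blast
  then have dpsi_cont: "continuous_on {0..l} (dpsi_coeff q a b (Suc k))"
    unfolding dpsi_coeff_Suc[abs_def]
    by (intro continuous_intros indefinite_integral_continuous_1)
  then have "continuous_on {0..l} (psi_coeff q a b (Suc k))"
    unfolding psi_coeff_Suc_eq_integral[abs_def]
    by (intro indefinite_integral_continuous_1 integrable_continuous_real)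
  then show ?case using dpsi_cont by simp
qed

lemma control_continuous: "continuous_on {0..l} (control q)"
  unfolding control_def[abs_def]
  by (intro continuous_intros indefinite_integral_continuous_1 q_integrable)

lemma control_diff:
  assumes "0 \<le> z" "z \<le> y" "y \<le> l"
  shows "control q y - control q z = (y - z) + integral {z..y} q"
  using integral_split_at[OF q_integrable assms] by (simp add: control_def)

lemma control_diff_eq_integral:
  assumes "0 \<le> z" "z \<le> y" "y \<le> l"
  shows "control q y - control q z = integral {z..y} (\<lambda>t. 1 + q t)"
proof -
  have "q integrable_on {z..y}"
    by (rule integrable_subinterval_real[OF q_integrable]) (use assms in auto)
  then have "integral {z..y} (\<lambda>t. 1 + q t) = integral {z..y} (\<lambda>t. 1) + integral {z..y} q"
    by (intro integral_add) auto
  then show ?thesis using control_diff[OF assms] assms by simp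
qed

lemma control_mono:
  assumes "0 \<le> z" "z \<le> y" "y \<le> l"
  shows "control q z \<le> control q y"
proof -
  have "q integrable_on {z..y}"
    by (rule integrable_subinterval_real[OF q_integrable]) (use assms in auto)
  then have "0 \<le> integral {z..y} q" using q_nonneg by (intro integral_nonneg) auto
  then show ?thesis using control_diff[OF assms] assms(2) by simp
qed

lemma control_ge_1: "x \<in> {0..l} \<Longrightarrow> 1 \<le> control q x"
  using control_mono[of 0 x] by (simp add: control_def)

lemma integral_control_power_increment_le:
  assumes "0 \<le> z" "z \<le> y" "y \<le> l"
  shows "integral {z..y} (\<lambda>t. (1 + q t) * control q t ^ j) \<le> control q y ^ j * (control q y - control q z)"
proof -
  have cont: "continuous_on {0..l} (\<lambda>t. control q t ^ j)"
    using control_continuous by (intro continuous_intros)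
  have "integral {z..y} (\<lambda>t. (1 + q t) * control q t ^ j) \<le> integral {z..y} (\<lambda>t. (1 + q t) * control q y ^ j)"
  proof (rule integral_le)
    show "(\<lambda>t. (1 + q t) * control q t ^ j) integrable_on {z..y}"
      "(\<lambda>t. (1 + q t) * control q y ^ j) integrable_on {z..y}"
      using integrable_one_plus_q_mult[OF cont] integrable_one_plus_q_mult[of "\<lambda>_. control q y ^ j"] assms
      by auto
    fix t assume t: "t \<in> {z..y}"
    then have "control q t ^ j \<le> control q y ^ j"
      using control_mono[of t y] control_ge_1[of t] assms by (intro power_mono) auto
    then show "(1 + q t) * control q t ^ j \<le> (1 + q t) * control q y ^ j"
      using q_nonneg[of t] by (intro mult_left_mono) auto
  qed
  also have "\<dots> = control q y ^ j * (control q y - control q z)"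
    using control_diff_eq_integral[OF assms] by (simp add: mult.commute)
  finally show ?thesis .
qed

text \<open>This is \<open>\<integral> F\<^sup>j dF \<le> F\<^sup>j\<^sup>+\<^sup>1/(j+1)\<close> for \<open>F = control q\<close>, which is merely absolutely
  continuous; increments of \<open>F\<^sup>j\<close> are uniformly small, so the increment criterion applies.\<close>

lemma integral_control_power_le:
  assumes x: "x \<in> {0..l}"
  shows "integral {0..x} (\<lambda>t. (1 + q t) * control q t ^ j) \<le> control q x ^ Suc j / real (Suc j)"
proof -
  let ?F = "control q"
  let ?h = "\<lambda>t. (1 + q t) * control q t ^ j"
  define g where "g y = integral {0..y} ?h - ?F y ^ Suc j / real (Suc j)" for y
  have cont: "continuous_on {0..l} (\<lambda>t. ?F t ^ j)"
    using control_continuous by (intro continuous_intros)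
  have h_int: "?h integrable_on {0..l}"
    using integrable_one_plus_q_mult[OF cont] l_pos by auto
  have "g x \<le> g 0"
  proof (rule locally_small_increments_imp_le[where g=g and F="?F"])
    show "0 \<le> x" using x by simp
    fix e :: real assume e: "e > 0"
    have "uniformly_continuous_on {0..l} (\<lambda>t. ?F t ^ j)"
      using cont by (intro compact_uniformly_continuous) auto
    then obtain d where d: "d > 0" and close: "\<And>s t. s \<in> {0..l} \<Longrightarrow> t \<in> {0..l} \<Longrightarrow> dist t s < d \<Longrightarrow>
        dist (?F t ^ j) (?F s ^ j) < e"
      unfolding uniformly_continuous_on_def using e by metis
    show "\<exists>d>0. \<forall>z y. 0 \<le> z \<longrightarrow> z \<le> y \<longrightarrow> y \<le> x \<longrightarrow> y - z < d \<longrightarrow> g y - g z \<le> e * (?F y - ?F z)"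
    proof (intro exI[of _ d] conjI allI impI d)
      fix z y assume zy: "0 \<le> z" "z \<le> y" "y \<le> x" "y - z < d"
      have yl: "y \<le> l" using zy x by auto
      have "g y - g z = integral {z..y} ?h - (?F y ^ Suc j - ?F z ^ Suc j) / real (Suc j)"
        unfolding g_def integral_split_at[OF h_int zy(1,2) yl] diff_divide_distrib by linarith
      also have "\<dots> \<le> ?F y ^ j * (?F y - ?F z) - ?F z ^ j * (?F y - ?F z)"
      proof -
        have "0 \<le> ?F z" using control_ge_1[of z] zy yl by simp
        then show ?thesis
          using integral_control_power_increment_le[OF zy(1,2) yl, of j]
            power_mult_diff_le[OF _ control_mono[OF zy(1,2) yl], of j]
          by linarith
      qed
      also have "\<dots> = (?F y ^ j - ?F z ^ j) * (?F y - ?F z)" by (simp add: algebra_simps)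
      also have "\<dots> \<le> e * (?F y - ?F z)"
        using close[of z y] zy yl d control_mono[OF zy(1,2) yl]
        by (intro mult_right_mono) (auto simp: dist_real_def)
      finally show "g y - g z \<le> e * (?F y - ?F z)" .
    qed
  qed
  then have "integral {0..x} ?h \<le> ?F x ^ Suc j / real (Suc j) - 1 / real (Suc j)"
    by (simp add: g_def control_def)
  also have "\<dots> \<le> ?F x ^ Suc j / real (Suc j)" by simp
  finally show ?thesis .
qed

lemma integral_bound_next_power:
  fixes f :: "real \<Rightarrow> real"
  assumes x: "x \<in> {0..l}" and f_int: "f integrable_on {0..x}" and C: "0 \<le> C"
    and le: "\<And>t. t \<in> {0..x} \<Longrightarrow> \<bar>f t\<bar> \<le> (1 + q t) * (C * control q t ^ j / fact j)"
  shows "\<bar>integral {0..x} f\<bar> \<le> C * control q x ^ Suc j / fact (Suc j)"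
proof -
  have "continuous_on {0..l} (\<lambda>t. control q t ^ j)"
    using control_continuous by (intro continuous_intros)
  then have g_int: "(\<lambda>t. (1 + q t) * control q t ^ j) integrable_on {0..x}"
    using integrable_one_plus_q_mult x by auto
  have "\<bar>integral {0..x} f\<bar> \<le> integral {0..x} (\<lambda>t. (C / fact j) * ((1 + q t) * control q t ^ j))"
    using integral_norm_bound_integral[OF f_int integrable_on_mult_right[OF g_int], of "C / fact j"] le
    by (simp add: field_simps)
  also have "\<dots> = (C / fact j) * integral {0..x} (\<lambda>t. (1 + q t) * control q t ^ j)" by simp
  also have "\<dots> \<le> (C / fact j) * (control q x ^ Suc j / real (Suc j))"
    using integral_control_power_le[OF x, of j] C by (intro mult_left_mono) auto
  also have "\<dots> = C * control q x ^ Suc j / fact (Suc j)" by (simp add: field_simps)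
  finally show ?thesis .
qed

definition coeff_bound :: "real \<Rightarrow> real \<Rightarrow> real" where
  "coeff_bound a b = \<bar>a\<bar> + \<bar>b\<bar> * (1 + l)"

lemma coeff_bound_nonneg: "0 \<le> coeff_bound a b"
  using l_pos by (simp add: coeff_bound_def)

lemma dpsi_coeff_Suc_bound_if_psi_coeff_bound:
  assumes psi_bound: "\<And>t. t \<in> {0..l} \<Longrightarrow>
      \<bar>psi_coeff q a b k t\<bar> \<le> coeff_bound a b * control q t ^ (2*k) / fact (2*k)"
    and x: "x \<in> {0..l}"
  shows "\<bar>dpsi_coeff q a b (Suc k) x\<bar> \<le> coeff_bound a b * control q x ^ Suc (2*k) / fact (Suc (2*k))"
proof -
  have "(\<lambda>t. q t * psi_coeff q a b k t) integrable_on {0..x}"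
    using psi_coeff_continuous x by (intro integrable_q_mult) auto
  then have "\<bar>integral {0..x} (\<lambda>t. q t * psi_coeff q a b k t)\<bar>
      \<le> coeff_bound a b * control q x ^ Suc (2*k) / fact (Suc (2*k))"
  proof (rule integral_bound_next_power[OF x _ coeff_bound_nonneg])
    fix t assume "t \<in> {0..x}"
    then have t: "t \<in> {0..l}" using x by auto
    have "\<bar>q t * psi_coeff q a b k t\<bar> \<le> q t * (coeff_bound a b * control q t ^ (2*k) / fact (2*k))"
      using mult_left_mono[OF psi_bound[OF t] q_nonneg[of t]] q_nonneg[of t] by (simp add: abs_mult)
    also have "\<dots> \<le> (1 + q t) * (coeff_bound a b * control q t ^ (2*k) / fact (2*k))"
      using coeff_bound_nonneg control_ge_1[OF t] by (intro mult_right_mono) auto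
    finally show "\<bar>q t * psi_coeff q a b k t\<bar> \<le> (1 + q t) * (coeff_bound a b * control q t ^ (2*k) / fact (2*k))" .
  qed
  then show ?thesis by (simp add: dpsi_coeff_Suc)
qed

lemma psi_coeff_bound:
  "x \<in> {0..l} \<Longrightarrow> \<bar>psi_coeff q a b k x\<bar> \<le> coeff_bound a b * control q x ^ (2*k) / fact (2*k)"
proof (induction k arbitrary: x)
  case 0
  then have "\<bar>a + b * x\<bar> \<le> \<bar>a\<bar> + \<bar>b\<bar> * (1 + l)"
    using abs_triangle_ineq[of a "b * x"] mult_left_mono[of x "1 + l" "\<bar>b\<bar>"]
    by (auto simp: abs_mult)
  then show ?case by (simp add: coeff_bound_def)
next
  case (Suc k)
  have "continuous_on {0..l} (dpsi_coeff q a b (Suc k))"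
    using psi_coeff_continuous by blast
  then have "continuous_on {0..x} (dpsi_coeff q a b (Suc k))"
    by (rule continuous_on_subset) (use Suc.prems in auto)
  then have "\<bar>integral {0..x} (dpsi_coeff q a b (Suc k))\<bar>
      \<le> coeff_bound a b * control q x ^ Suc (Suc (2*k)) / fact (Suc (Suc (2*k)))"
  proof (rule integral_bound_next_power[OF Suc.prems integrable_continuous_real coeff_bound_nonneg])
    fix t assume "t \<in> {0..x}"
    then have t: "t \<in> {0..l}" using Suc.prems by auto
    have "\<bar>dpsi_coeff q a b (Suc k) t\<bar> \<le> 1 * (coeff_bound a b * control q t ^ Suc (2*k) / fact (Suc (2*k)))"
      using dpsi_coeff_Suc_bound_if_psi_coeff_bound[OF Suc.IH t] by simp
    also have "\<dots> \<le> (1 + q t) * (coeff_bound a b * control q t ^ Suc (2*k) / fact (Suc (2*k)))"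
      using coeff_bound_nonneg control_ge_1[OF t] q_nonneg[of t] by (intro mult_right_mono) auto
    finally show "\<bar>dpsi_coeff q a b (Suc k) t\<bar> \<le> (1 + q t) * (coeff_bound a b * control q t ^ Suc (2*k) / fact (Suc (2*k)))" .
  qed
  moreover have "2 * Suc k = Suc (Suc (2*k))" by simp
  ultimately show ?case unfolding psi_coeff_Suc_eq_integral by metis
qed

lemma dpsi_coeff_Suc_bound:
  assumes "x \<in> {0..l}"
  shows "\<bar>dpsi_coeff q a b (Suc k) x\<bar> \<le> coeff_bound a b * control q x ^ Suc (2*k) / fact (Suc (2*k))"
  by (rule dpsi_coeff_Suc_bound_if_psi_coeff_bound[OF psi_coeff_bound assms])

definition coeff_rate :: real where
  "coeff_rate = control q l ^ 2"

lemma coeff_rate_ge_1: "1 \<le> coeff_rate"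
  using control_ge_1[of l] l_pos by (simp add: coeff_rate_def one_le_power)

lemma control_power_div_fact_le:
  assumes x: "x \<in> {0..l}" and "k \<le> m" "m \<le> 2 * k"
  shows "control q x ^ m / fact m \<le> coeff_rate ^ k / fact k"
proof -
  have "control q x ^ m \<le> control q l ^ m"
    using control_mono[of x l] control_ge_1[OF x] x by (intro power_mono) auto
  also have "\<dots> \<le> control q l ^ (2 * k)"
    using control_ge_1[of l] l_pos assms by (intro power_increasing) auto
  also have "\<dots> = coeff_rate ^ k" by (simp add: coeff_rate_def power_mult)
  finally have "control q x ^ m / fact m \<le> coeff_rate ^ k / fact m"
    by (simp add: divide_right_mono)
  also have "\<dots> \<le> coeff_rate ^ k / fact k"
    using coeff_rate_ge_1 assms by (intro divide_left_mono fact_mono) auto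
  finally show ?thesis .
qed

lemma psi_coeff_uniform_bound:
  assumes x: "x \<in> {0..l}"
  shows "\<bar>psi_coeff q a b k x\<bar> \<le> coeff_bound a b * coeff_rate ^ k / fact k"
  using psi_coeff_bound[OF x, of a b k]
    mult_left_mono[OF control_power_div_fact_le[OF x, of k "2 * k"] coeff_bound_nonneg[of a b]]
  by simp

lemma dpsi_coeff_uniform_bound:
  assumes x: "x \<in> {0..l}"
  shows "\<bar>dpsi_coeff q a b k x\<bar> \<le> coeff_bound a b * coeff_rate ^ k / fact k"
proof (cases k)
  case 0
  have "\<bar>b\<bar> \<le> \<bar>b\<bar> * (1 + l)" using l_pos by (simp add: mult_le_cancel_left1)
  then show ?thesis using 0 by (simp add: coeff_bound_def)
next
  case (Suc m)
  then show ?thesis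
    using dpsi_coeff_Suc_bound[OF x, of a b m]
      mult_left_mono[OF control_power_div_fact_le[OF x, of k "Suc (2 * m)"] coeff_bound_nonneg[of a b]]
    by simp
qed

lemma exp_majorant_summable: "summable (\<lambda>k. coeff_bound a b * (c * coeff_rate) ^ k / fact k)"
proof -
  have "summable (\<lambda>k. coeff_bound a b * (inverse (fact k) * (c * coeff_rate) ^ k))"
    by (intro summable_mult summable_exp)
  then show ?thesis by (simp add: field_simps)
qed

lemma psi_terms_bound:
  assumes x: "x \<in> {0..l}"
  shows "\<bar>lam ^ k * psi_coeff q a b k x\<bar> \<le> coeff_bound a b * (\<bar>lam\<bar> * coeff_rate) ^ k / fact k"
    and "\<bar>lam ^ k * dpsi_coeff q a b k x\<bar> \<le> coeff_bound a b * (\<bar>lam\<bar> * coeff_rate) ^ k / fact k"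
proof -
  have "\<bar>lam\<bar> ^ k * \<bar>f\<bar> \<le> coeff_bound a b * (\<bar>lam\<bar> * coeff_rate) ^ k / fact k"
    if "\<bar>f\<bar> \<le> coeff_bound a b * coeff_rate ^ k / fact k" for f
    using mult_left_mono[OF that, of "\<bar>lam\<bar> ^ k"] by (simp add: power_mult_distrib mult_ac)
  then show "\<bar>lam ^ k * psi_coeff q a b k x\<bar> \<le> coeff_bound a b * (\<bar>lam\<bar> * coeff_rate) ^ k / fact k"
    and "\<bar>lam ^ k * dpsi_coeff q a b k x\<bar> \<le> coeff_bound a b * (\<bar>lam\<bar> * coeff_rate) ^ k / fact k"
    using psi_coeff_uniform_bound[OF x] dpsi_coeff_uniform_bound[OF x]
    by (simp_all add: abs_mult power_abs)
qed

lemma psi_terms_summable: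
  assumes x: "x \<in> {0..l}"
  shows "summable (\<lambda>k. lam ^ k * psi_coeff q a b k x)"
    and "summable (\<lambda>k. lam ^ k * dpsi_coeff q a b k x)"
  by (rule summable_comparison_test[OF _ exp_majorant_summable[of a b "\<bar>lam\<bar>"]],
      use psi_terms_bound[OF x] in auto)+

lemma exp_majorant_nonneg: "0 \<le> coeff_bound a b * (c * coeff_rate) ^ k / fact k" if "0 \<le> c"
  using coeff_bound_nonneg coeff_rate_ge_1 that by simp

lemma dpsi_integral_equation:
  assumes x: "x \<in> {0..l}"
  shows "(\<lambda>t. q t * psi q a b lam t) integrable_on {0..x}"
    and "dpsi q a b lam x = b - lam * integral {0..x} (\<lambda>t. q t * psi q a b lam t)"
proof -
  let ?f = "\<lambda>k t. q t * (lam ^ k * psi_coeff q a b k t)"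
  have f_int: "?f k integrable_on {0..x}" for k
    using psi_coeff_continuous x by (intro integrable_q_mult continuous_intros) auto
  have dominated: "\<bar>?f k t\<bar> \<le> q t * (coeff_bound a b * (\<bar>lam\<bar> * coeff_rate) ^ k / fact k)"
    if t: "t \<in> {0..x}" for k t
  proof -
    have "\<bar>lam ^ k * psi_coeff q a b k t\<bar> \<le> coeff_bound a b * (\<bar>lam\<bar> * coeff_rate) ^ k / fact k"
      using psi_terms_bound(1) t x by auto
    from mult_left_mono[OF this q_nonneg[of t]] show ?thesis
      using q_nonneg[of t] by (simp add: abs_mult)
  qed
  have q_int: "q integrable_on {0..x}"
    by (rule integrable_subinterval_real[OF q_integrable]) (use x in auto)
  note termwise = integral_suminf_dominated[OF f_int q_int q_nonneg exp_majorant_nonneg[OF abs_ge_zero]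
      exp_majorant_summable dominated]
  have sum_eq: "(\<Sum>k. ?f k t) = q t * psi q a b lam t" if t: "t \<in> {0..x}" for t
    unfolding psi_def using psi_terms_summable(1)[of t] t x by (intro suminf_mult) auto
  show "(\<lambda>t. q t * psi q a b lam t) integrable_on {0..x}"
    by (rule iffD1[OF integrable_cong[OF sum_eq] termwise(1)])
  have "integral {0..x} (?f k) = lam ^ k * integral {0..x} (\<lambda>t. q t * psi_coeff q a b k t)" for k
    by (simp add: mult.left_commute[of "q _"])
  then have "(\<lambda>k. lam ^ k * integral {0..x} (\<lambda>t. q t * psi_coeff q a b k t))
      sums integral {0..x} (\<lambda>t. q t * psi q a b lam t)"
    using termwise(2) integral_cong[of "{0..x}", OF sum_eq] by simp
  from sums_mult[OF this, of "- lam"]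
  have "(\<lambda>k. lam ^ Suc k * dpsi_coeff q a b (Suc k) x)
      sums (- lam * integral {0..x} (\<lambda>t. q t * psi q a b lam t))"
    by (simp add: dpsi_coeff_Suc mult_ac)
  then have "(\<lambda>k. lam ^ k * dpsi_coeff q a b k x)
      sums (- lam * integral {0..x} (\<lambda>t. q t * psi q a b lam t) + b)"
    using sums_Suc_iff[of "\<lambda>k. lam ^ k * dpsi_coeff q a b k x"] by simp
  then show "dpsi q a b lam x = b - lam * integral {0..x} (\<lambda>t. q t * psi q a b lam t)"
    unfolding dpsi_def by (simp add: sums_unique[symmetric])
qed

lemma psi_integral_equation:
  assumes x: "x \<in> {0..l}"
  shows "dpsi q a b lam integrable_on {0..x}"
    and "psi q a b lam x = a + integral {0..x} (dpsi q a b lam)"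
proof -
  let ?f = "\<lambda>k t. lam ^ k * dpsi_coeff q a b k t"
  have f_int: "?f k integrable_on {0..x}" for k
  proof -
    have "continuous_on {0..l} (?f k)"
      using psi_coeff_continuous by (intro continuous_intros) auto
    then show ?thesis
      by (rule integrable_subinterval_real[OF integrable_continuous_real]) (use x in auto)
  qed
  have dominated: "\<bar>?f k t\<bar> \<le> 1 * (coeff_bound a b * (\<bar>lam\<bar> * coeff_rate) ^ k / fact k)"
    if t: "t \<in> {0..x}" for k t
    using psi_terms_bound(2)[of t] t x by auto
  note termwise = integral_suminf_dominated[OF f_int integrable_const_ivl _ exp_majorant_nonneg[OF abs_ge_zero]
      exp_majorant_summable dominated]
  have sum_eq: "(\<lambda>t. \<Sum>k. ?f k t) = dpsi q a b lam" by (simp add: dpsi_def fun_eq_iff)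
  show "dpsi q a b lam integrable_on {0..x}" using termwise(1) sum_eq by simp
  have "integral {0..x} (?f k) = lam ^ k * psi_coeff q a b k x - lam ^ k * psi_coeff q a b k 0" for k
  proof (cases k)
    case 0
    then show ?thesis using x by (simp add: algebra_simps)
  next
    case Suc
    then show ?thesis by (simp only: integral_mult_right psi_coeff_Suc_eq_integral psi_coeff_at_0) simp
  qed
  then have "(\<lambda>k. lam ^ k * psi_coeff q a b k x - lam ^ k * psi_coeff q a b k 0)
      sums integral {0..x} (dpsi q a b lam)"
    using termwise(2) sum_eq by simp
  moreover have "(\<lambda>k. lam ^ k * psi_coeff q a b k x - lam ^ k * psi_coeff q a b k 0)
      sums (psi q a b lam x - psi q a b lam 0)"
    unfolding psi_def using psi_terms_summable(1) x l_pos by (intro sums_diff summable_sums) auto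
  ultimately have "integral {0..x} (dpsi q a b lam) = psi q a b lam x - psi q a b lam 0"
    by (rule sums_unique2)
  then show "psi q a b lam x = a + integral {0..x} (dpsi q a b lam)"
    by (simp add: psi_at_0)
qed

lemma dpsi_continuous: "continuous_on {0..l} (dpsi q a b lam)"
proof -
  have "(\<lambda>t. q t * psi q a b lam t) integrable_on {0..l}"
    using dpsi_integral_equation(1)[of l] l_pos by auto
  then have "continuous_on {0..l} (\<lambda>x. b - lam * integral {0..x} (\<lambda>t. q t * psi q a b lam t))"
    by (intro continuous_intros indefinite_integral_continuous_1)
  then show ?thesis by (rule continuous_on_eq) (simp add: dpsi_integral_equation(2))
qed

lemma psi_continuous: "continuous_on {0..l} (psi q a b lam)"
proof -
  have "dpsi q a b lam integrable_on {0..l}"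
    using psi_integral_equation(1)[of l] l_pos by auto
  then have "continuous_on {0..l} (\<lambda>x. a + integral {0..x} (dpsi q a b lam))"
    by (intro continuous_intros indefinite_integral_continuous_1)
  then show ?thesis by (rule continuous_on_eq) (simp add: psi_integral_equation(2))
qed

lemma psi_has_derivative:
  assumes x: "x \<in> {0..l}"
  shows "(psi q a b lam has_real_derivative dpsi q a b lam x) (at x within {0..l})"
proof -
  have "((\<lambda>u. integral {0..u} (dpsi q a b lam)) has_real_derivative dpsi q a b lam x) (at x within {0..l})"
    using integral_has_vector_derivative[OF dpsi_continuous x]
    by (simp add: has_real_derivative_iff_has_vector_derivative)
  then have "((\<lambda>u. a + integral {0..u} (dpsi q a b lam)) has_real_derivative dpsi q a b lam x) (at x within {0..l})"
    by (intro derivative_eq_intros) auto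
  then show ?thesis
    by (rule has_field_derivative_transform_within[where d=1]) (use x psi_integral_equation(2) in auto)
qed

lemma psi_is_solution:
  assumes "\<And>t. q t = (n t)\<^sup>2"
  shows "is_solution n l \<nu> (psi q a b (\<nu>\<^sup>2)) (dpsi q a b (\<nu>\<^sup>2))"
  unfolding is_solution_def
proof (intro conjI ballI)
  fix x assume x: "x \<in> {0..l}"
  show "(psi q a b (\<nu>\<^sup>2) has_real_derivative dpsi q a b (\<nu>\<^sup>2) x) (at x within {0..l})"
    by (rule psi_has_derivative[OF x])
  have "((\<lambda>t. - \<nu>\<^sup>2 * (q t * psi q a b (\<nu>\<^sup>2) t)) has_integral
          - \<nu>\<^sup>2 * integral {0..x} (\<lambda>t. q t * psi q a b (\<nu>\<^sup>2) t)) {0..x}"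
    by (intro has_integral_mult_right integrable_integral dpsi_integral_equation(1)[OF x])
  moreover have "- \<nu>\<^sup>2 * integral {0..x} (\<lambda>t. q t * psi q a b (\<nu>\<^sup>2) t) = dpsi q a b (\<nu>\<^sup>2) x - dpsi q a b (\<nu>\<^sup>2) 0"
    using dpsi_integral_equation(2)[OF x] dpsi_at_0 by simp
  ultimately show "((\<lambda>t. - (\<nu>\<^sup>2 * (n t)\<^sup>2 * psi q a b (\<nu>\<^sup>2) t)) has_integral
          (dpsi q a b (\<nu>\<^sup>2) x - dpsi q a b (\<nu>\<^sup>2) 0)) {0..x}"
    by (simp add: assms mult_ac)
qed

section \<open>The Wronskian and the entire transfer matrix\<close>

text \<open>Solutions in integrated form, as needed for the Wronskian: since \<open>q\<close> is merely integrable,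
  \<open>\<psi>'\<close> is not differentiable and the Wronskian is not a \<open>C\<^sup>1\<close> function.\<close>

definition integral_solution :: "real \<Rightarrow> (real \<Rightarrow> real) \<Rightarrow> (real \<Rightarrow> real) \<Rightarrow> bool" where
  "integral_solution lam p d \<longleftrightarrow> continuous_on {0..l} p \<and> continuous_on {0..l} d \<and>
     (\<forall>z y. 0 \<le> z \<longrightarrow> z \<le> y \<longrightarrow> y \<le> l \<longrightarrow>
        p y - p z = integral {z..y} d \<and> d y - d z = - lam * integral {z..y} (\<lambda>t. q t * p t))"

lemma psi_integral_solution: "integral_solution lam (psi q a b lam) (dpsi q a b lam)"
  unfolding integral_solution_def
proof (intro conjI allI impI psi_continuous dpsi_continuous)
  fix z y assume zy: "0 \<le> z" "z \<le> y" "y \<le> l"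
  have "dpsi q a b lam integrable_on {0..l}"
    using psi_integral_equation(1)[of l] l_pos by auto
  from integral_split_at[OF this zy]
  show "psi q a b lam y - psi q a b lam z = integral {z..y} (dpsi q a b lam)"
    using psi_integral_equation(2)[of y] psi_integral_equation(2)[of z] zy by simp
  have "(\<lambda>t. q t * psi q a b lam t) integrable_on {0..l}"
    using dpsi_integral_equation(1)[of l] l_pos by auto
  from integral_split_at[OF this zy]
  show "dpsi q a b lam y - dpsi q a b lam z = - lam * integral {z..y} (\<lambda>t. q t * psi q a b lam t)"
    using dpsi_integral_equation(2)[of y a b lam] dpsi_integral_equation(2)[of z a b lam] zy
    by (simp add: algebra_simps)
qed

lemma wronskian_increment_eq:
  assumes sol1: "integral_solution lam p1 d1" and sol2: "integral_solution lam p2 d2"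
    and zy: "0 \<le> z" "z \<le> y" "y \<le> l"
  shows "(p1 y * d2 y - p2 y * d1 y) - (p1 z * d2 z - p2 z * d1 z) =
      - lam * integral {z..y} (\<lambda>t. q t * (p1 y * (p2 t - p2 y) - p2 y * (p1 t - p1 y)))
      + integral {z..y} (\<lambda>t. d2 z * (d1 t - d1 z) - d1 z * (d2 t - d2 z))"
proof -
  have cont: "continuous_on {0..l} p1" "continuous_on {0..l} p2"
    "continuous_on {0..l} d1" "continuous_on {0..l} d2"
    using sol1 sol2 by (simp_all add: integral_solution_def)
  have eq: "p1 y - p1 z = integral {z..y} d1" "p2 y - p2 z = integral {z..y} d2"
    "d1 y - d1 z = - lam * integral {z..y} (\<lambda>t. q t * p1 t)"
    "d2 y - d2 z = - lam * integral {z..y} (\<lambda>t. q t * p2 t)"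
    using sol1 sol2 zy by (simp_all add: integral_solution_def)
  have q_int: "(\<lambda>t. q t * f t) integrable_on {z..y}" if "continuous_on {0..l} f" for f
    using integrable_q_mult[OF that] zy by simp
  have int: "f integrable_on {z..y}" if "continuous_on {0..l} f" for f :: "real \<Rightarrow> real"
    by (rule integrable_continuous_real, rule continuous_on_subset[OF that]) (use zy in auto)
  have "integral {z..y} (\<lambda>t. q t * (p1 y * (p2 t - p2 y) - p2 y * (p1 t - p1 y)))
      = integral {z..y} (\<lambda>t. p1 y * (q t * p2 t) - p2 y * (q t * p1 t))"
    by (rule integral_cong) (simp add: algebra_simps)
  also have "\<dots> = p1 y * integral {z..y} (\<lambda>t. q t * p2 t) - p2 y * integral {z..y} (\<lambda>t. q t * p1 t)"
    using q_int cont by (subst integral_diff) (auto intro: integrable_on_mult_right)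
  finally have X: "integral {z..y} (\<lambda>t. q t * (p1 y * (p2 t - p2 y) - p2 y * (p1 t - p1 y)))
      = p1 y * integral {z..y} (\<lambda>t. q t * p2 t) - p2 y * integral {z..y} (\<lambda>t. q t * p1 t)" .
  have "integral {z..y} (\<lambda>t. d2 z * (d1 t - d1 z) - d1 z * (d2 t - d2 z))
      = integral {z..y} (\<lambda>t. d2 z * d1 t - d1 z * d2 t)"
    by (rule integral_cong) (simp add: algebra_simps)
  also have "\<dots> = d2 z * integral {z..y} d1 - d1 z * integral {z..y} d2"
    using int cont by (subst integral_diff) (auto intro: integrable_on_mult_right)
  finally have Y: "integral {z..y} (\<lambda>t. d2 z * (d1 t - d1 z) - d1 z * (d2 t - d2 z))
      = d2 z * integral {z..y} d1 - d1 z * integral {z..y} d2" .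
  have "(p1 y * d2 y - p2 y * d1 y) - (p1 z * d2 z - p2 z * d1 z) =
      p1 y * (d2 y - d2 z) + d2 z * (p1 y - p1 z) - p2 y * (d1 y - d1 z) - d1 z * (p2 y - p2 z)"
    by (simp add: algebra_simps)
  then show ?thesis unfolding X Y eq by (simp add: algebra_simps)
qed

text \<open>Freezing \<open>p\<^sub>i\<close> at \<open>y\<close> and \<open>d\<^sub>i\<close> at \<open>z\<close> makes both integrands small when the solutions
  oscillate little on \<open>[z, y]\<close>.\<close>

lemma wronskian_increment_bound:
  assumes sol1: "integral_solution lam p1 d1" and sol2: "integral_solution lam p2 d2"
    and zy: "0 \<le> z" "z \<le> y" "y \<le> l"
    and bound: "\<And>x. x \<in> {0..l} \<Longrightarrow> \<bar>p1 x\<bar> \<le> B \<and> \<bar>p2 x\<bar> \<le> B \<and> \<bar>d1 x\<bar> \<le> B \<and> \<bar>d2 x\<bar> \<le> B"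
    and osc: "\<And>t. t \<in> {z..y} \<Longrightarrow>
      \<bar>p1 t - p1 y\<bar> \<le> \<eta> \<and> \<bar>p2 t - p2 y\<bar> \<le> \<eta> \<and> \<bar>d1 t - d1 z\<bar> \<le> \<eta> \<and> \<bar>d2 t - d2 z\<bar> \<le> \<eta>"
  shows "\<bar>(p1 y * d2 y - p2 y * d1 y) - (p1 z * d2 z - p2 z * d1 z)\<bar>
      \<le> 2 * B * \<eta> * (\<bar>lam\<bar> + 1) * (control q y - control q z)"
proof -
  have cont: "continuous_on {0..l} p1" "continuous_on {0..l} p2"
    "continuous_on {0..l} d1" "continuous_on {0..l} d2"
    using sol1 sol2 by (simp_all add: integral_solution_def)
  have B_nonneg: "0 \<le> B" using bound[of 0] l_pos by (auto intro: order_trans[OF abs_ge_zero])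
  have q_int: "q integrable_on {z..y}"
    by (rule integrable_subinterval_real[OF q_integrable]) (use zy in auto)
  have X: "norm (integral {z..y} (\<lambda>t. q t * (p1 y * (p2 t - p2 y) - p2 y * (p1 t - p1 y))))
      \<le> integral {z..y} (\<lambda>t. q t * (2 * B * \<eta>))"
  proof (rule integral_norm_bound_integral)
    show "(\<lambda>t. q t * (p1 y * (p2 t - p2 y) - p2 y * (p1 t - p1 y))) integrable_on {z..y}"
      using cont zy by (intro integrable_q_mult continuous_intros) auto
    show "(\<lambda>t. q t * (2 * B * \<eta>)) integrable_on {z..y}"
      using q_int by (rule integrable_on_mult_left)
    fix t assume t: "t \<in> {z..y}"
    have "\<bar>p1 y * (p2 t - p2 y) - p2 y * (p1 t - p1 y)\<bar> \<le> \<bar>p1 y\<bar> * \<bar>p2 t - p2 y\<bar> + \<bar>p2 y\<bar> * \<bar>p1 t - p1 y\<bar>"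
      by (simp add: abs_mult[symmetric] abs_triangle_ineq4)
    also have "\<dots> \<le> B * \<eta> + B * \<eta>"
      using bound[of y] osc[OF t] B_nonneg zy by (intro add_mono mult_mono) auto
    finally show "norm (q t * (p1 y * (p2 t - p2 y) - p2 y * (p1 t - p1 y))) \<le> q t * (2 * B * \<eta>)"
      using mult_left_mono[OF _ q_nonneg[of t]] q_nonneg[of t] by (simp add: abs_mult)
  qed
  have Y: "norm (integral {z..y} (\<lambda>t. d2 z * (d1 t - d1 z) - d1 z * (d2 t - d2 z)))
      \<le> integral {z..y} (\<lambda>t. 2 * B * \<eta>)"
  proof (rule integral_norm_bound_integral)
    show "(\<lambda>t. d2 z * (d1 t - d1 z) - d1 z * (d2 t - d2 z)) integrable_on {z..y}"
      using cont zy
      by (intro integrable_continuous_real continuous_intros) (auto intro: continuous_on_subset)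
    fix t assume t: "t \<in> {z..y}"
    have "\<bar>d2 z * (d1 t - d1 z) - d1 z * (d2 t - d2 z)\<bar> \<le> \<bar>d2 z\<bar> * \<bar>d1 t - d1 z\<bar> + \<bar>d1 z\<bar> * \<bar>d2 t - d2 z\<bar>"
      by (simp add: abs_mult[symmetric] abs_triangle_ineq4)
    also have "\<dots> \<le> B * \<eta> + B * \<eta>"
      using bound[of z] osc[OF t] B_nonneg zy by (intro add_mono mult_mono) auto
    finally show "norm (d2 z * (d1 t - d1 z) - d1 z * (d2 t - d2 z)) \<le> 2 * B * \<eta>" by simp
  qed (rule integrable_const_ivl)
  have "0 \<le> \<eta>" using osc[of y] zy by auto
  have "\<bar>(p1 y * d2 y - p2 y * d1 y) - (p1 z * d2 z - p2 z * d1 z)\<bar>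
      \<le> \<bar>lam\<bar> * \<bar>integral {z..y} (\<lambda>t. q t * (p1 y * (p2 t - p2 y) - p2 y * (p1 t - p1 y)))\<bar>
        + \<bar>integral {z..y} (\<lambda>t. d2 z * (d1 t - d1 z) - d1 z * (d2 t - d2 z))\<bar>"
    unfolding wronskian_increment_eq[OF sol1 sol2 zy] abs_mult[symmetric] abs_minus_cancel
    by (rule order_trans[OF abs_triangle_ineq]) (simp add: abs_mult)
  also have "\<dots> \<le> \<bar>lam\<bar> * (2 * B * \<eta> * integral {z..y} q) + 2 * B * \<eta> * (y - z)"
    using X Y zy by (intro add_mono mult_left_mono) (auto simp: real_norm_def algebra_simps)
  also have "\<dots> \<le> 2 * B * \<eta> * (\<bar>lam\<bar> + 1) * (control q y - control q z)"
  proof -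
    have "0 \<le> integral {z..y} q"
      using q_int q_nonneg by (simp add: integral_nonneg)
    then have "0 \<le> 2 * B * \<eta> * (\<bar>lam\<bar> * (y - z) + integral {z..y} q)"
      using \<open>0 \<le> \<eta>\<close> B_nonneg zy by simp
    then show ?thesis unfolding control_diff[OF zy] by (simp add: algebra_simps)
  qed
  finally show ?thesis .
qed

lemma wronskian_constant:
  assumes sol1: "integral_solution lam p1 d1" and sol2: "integral_solution lam p2 d2"
  shows "p1 l * d2 l - p2 l * d1 l = p1 0 * d2 0 - p2 0 * d1 0"
proof -
  define W where "W x = p1 x * d2 x - p2 x * d1 x" for x
  have cont: "continuous_on {0..l} p1" "continuous_on {0..l} p2"
    "continuous_on {0..l} d1" "continuous_on {0..l} d2"
    using sol1 sol2 by (simp_all add: integral_solution_def)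
  define P where "P t = (p1 t, p2 t, d1 t, d2 t)" for t
  have P_cont: "continuous_on {0..l} P"
    unfolding P_def using cont by (intro continuous_intros)
  obtain B0 where "\<forall>x\<in>{0..l}. norm (P x) \<le> B0"
    using compact_imp_bounded[OF compact_continuous_image[OF P_cont]] by (auto simp: bounded_iff)
  then obtain B where B: "B > 0"
    and bound: "\<And>x. x \<in> {0..l} \<Longrightarrow> \<bar>p1 x\<bar> \<le> B \<and> \<bar>p2 x\<bar> \<le> B \<and> \<bar>d1 x\<bar> \<le> B \<and> \<bar>d2 x\<bar> \<le> B"
  proof (intro that[of "max 1 B0"] conjI)
    fix x assume x: "x \<in> {0..l}"
    have "norm (P x) \<le> max 1 B0" using \<open>\<forall>x\<in>{0..l}. norm (P x) \<le> B0\<close> x by force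
    moreover have "norm (p1 x) \<le> norm (P x)" "norm (p2 x) \<le> norm (P x)"
      "norm (d1 x) \<le> norm (P x)" "norm (d2 x) \<le> norm (P x)"
      unfolding P_def
      by (rule norm_fst_le order_trans[OF norm_fst_le norm_snd_le]
          order_trans[OF norm_fst_le order_trans[OF norm_snd_le norm_snd_le]]
          order_trans[OF norm_snd_le order_trans[OF norm_snd_le norm_snd_le]])+
    ultimately show "\<bar>p1 x\<bar> \<le> max 1 B0" "\<bar>p2 x\<bar> \<le> max 1 B0" "\<bar>d1 x\<bar> \<le> max 1 B0" "\<bar>d2 x\<bar> \<le> max 1 B0"
      by simp_all
  qed simp
  have P_dist: "dist (p1 t) (p1 s) \<le> dist (P t) (P s)" "dist (p2 t) (p2 s) \<le> dist (P t) (P s)"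
    "dist (d1 t) (d1 s) \<le> dist (P t) (P s)" "dist (d2 t) (d2 s) \<le> dist (P t) (P s)" for t s
    using dist_fst_le[of "P t" "P s"] order_trans[OF dist_fst_le dist_snd_le, of "P t" "P s"]
      order_trans[OF dist_fst_le order_trans[OF dist_snd_le dist_snd_le], of "P t" "P s"]
      order_trans[OF dist_snd_le order_trans[OF dist_snd_le dist_snd_le], of "P t" "P s"]
    by (simp_all add: P_def)
  have P_unif: "uniformly_continuous_on {0..l} P"
    using P_cont by (intro compact_uniformly_continuous) auto
  have "W l = W 0"
  proof (rule locally_small_increments_imp_eq[where g = W and F = "control q"])
    fix e :: real assume e: "e > 0"
    define \<eta> where "\<eta> = e / (2 * B * (\<bar>lam\<bar> + 1))"
    have \<eta>: "\<eta> > 0" using e B by (simp add: \<eta>_def)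
    obtain d where d: "d > 0"
      and close: "\<And>s t. s \<in> {0..l} \<Longrightarrow> t \<in> {0..l} \<Longrightarrow> dist t s < d \<Longrightarrow> dist (P t) (P s) < \<eta>"
      using P_unif \<eta> unfolding uniformly_continuous_on_def by metis
    show "\<exists>d>0. \<forall>z y. 0 \<le> z \<longrightarrow> z \<le> y \<longrightarrow> y \<le> l \<longrightarrow> y - z < d
        \<longrightarrow> \<bar>W y - W z\<bar> \<le> e * (control q y - control q z)"
    proof (intro exI[of _ d] conjI allI impI)
      show "d > 0" by (fact d)
      fix z y assume zy: "0 \<le> z" "z \<le> y" "y \<le> l" "y - z < d"
      have "\<bar>W y - W z\<bar> \<le> 2 * B * \<eta> * (\<bar>lam\<bar> + 1) * (control q y - control q z)"
        unfolding W_def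
      proof (rule wronskian_increment_bound[OF sol1 sol2 zy(1-3) bound])
        fix t assume t: "t \<in> {z..y}"
        then have "dist (P t) (P y) < \<eta>" "dist (P t) (P z) < \<eta>"
          using close[of y t] close[of z t] zy by (auto simp: dist_real_def)
        then show "\<bar>p1 t - p1 y\<bar> \<le> \<eta> \<and> \<bar>p2 t - p2 y\<bar> \<le> \<eta> \<and> \<bar>d1 t - d1 z\<bar> \<le> \<eta> \<and> \<bar>d2 t - d2 z\<bar> \<le> \<eta>"
          using P_dist[of t y] P_dist[of t z] by (auto simp: dist_real_def)
      qed
      also have "2 * B * \<eta> * (\<bar>lam\<bar> + 1) = e" using B by (simp add: \<eta>_def)
      finally show "\<bar>W y - W z\<bar> \<le> e * (control q y - control q z)" .
    qed
  qed (use l_pos in simp)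
  then show ?thesis by (simp add: W_def)
qed

lemma psi_wronskian: "psi q 1 0 lam l * dpsi q 0 1 lam l - psi q 0 1 lam l * dpsi q 1 0 lam l = 1"
  using wronskian_constant[OF psi_integral_solution[of lam 1 0] psi_integral_solution[of lam 0 1]]
  by (simp add: psi_at_0 dpsi_at_0)

lemma psi_entire_sums:
  shows "(\<lambda>k. complex_of_real (psi_coeff q a b k l) * z ^ k) sums psi_entire q a b l z"
    and "(\<lambda>k. complex_of_real (dpsi_coeff q a b k l) * z ^ k) sums dpsi_entire q a b l z"
proof -
  have "summable (\<lambda>k. complex_of_real (f k) * z ^ k)"
    if "\<And>k. \<bar>f k\<bar> \<le> coeff_bound a b * coeff_rate ^ k / fact k" for f
  proof (rule summable_comparison_test[OF _ exp_majorant_summable[of a b "cmod z"]], intro exI allI impI)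
    fix k :: nat
    have "norm (complex_of_real (f k) * z ^ k) = \<bar>f k\<bar> * cmod z ^ k"
      by (simp add: norm_mult norm_power)
    also have "\<dots> \<le> (coeff_bound a b * coeff_rate ^ k / fact k) * cmod z ^ k"
      using that by (intro mult_right_mono) auto
    also have "\<dots> = coeff_bound a b * (cmod z * coeff_rate) ^ k / fact k"
      by (simp add: power_mult_distrib field_simps)
    finally show "norm (complex_of_real (f k) * z ^ k) \<le> coeff_bound a b * (cmod z * coeff_rate) ^ k / fact k" .
  qed
  then show "(\<lambda>k. complex_of_real (psi_coeff q a b k l) * z ^ k) sums psi_entire q a b l z"
    and "(\<lambda>k. complex_of_real (dpsi_coeff q a b k l) * z ^ k) sums dpsi_entire q a b l z"
    unfolding psi_entire_def dpsi_entire_def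
    using psi_coeff_uniform_bound dpsi_coeff_uniform_bound l_pos
    by (auto intro!: summable_sums)
qed

lemma psi_entire_holomorphic:
  "psi_entire q a b l holomorphic_on UNIV" "dpsi_entire q a b l holomorphic_on UNIV"
  by (rule power_series_entire, rule psi_entire_sums)+

lemma psi_entire_of_real:
  "psi_entire q a b l (of_real lam) = of_real (psi q a b lam l)"
  "dpsi_entire q a b l (of_real lam) = of_real (dpsi q a b lam l)"
proof -
  have l: "l \<in> {0..l}" using l_pos by auto
  have "(\<lambda>k. complex_of_real (psi_coeff q a b k l) * of_real lam ^ k) sums of_real (psi q a b lam l)"
    unfolding psi_def using sums_of_real[OF summable_sums[OF psi_terms_summable(1)[OF l]]]
    by (simp add: mult.commute)
  then show "psi_entire q a b l (of_real lam) = of_real (psi q a b lam l)"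
    using sums_unique2[OF psi_entire_sums(1)] by blast
  have "(\<lambda>k. complex_of_real (dpsi_coeff q a b k l) * of_real lam ^ k) sums of_real (dpsi q a b lam l)"
    unfolding dpsi_def using sums_of_real[OF summable_sums[OF psi_terms_summable(2)[OF l]]]
    by (simp add: mult.commute)
  then show "dpsi_entire q a b l (of_real lam) = of_real (dpsi q a b lam l)"
    using sums_unique2[OF psi_entire_sums(2)] by blast
qed

lemma transfer_matrix_entries:
  fixes M :: "real^2^2"
  assumes q_eq: "\<And>t. q t = (n t)\<^sup>2" and M: "is_transfer_matrix n l \<nu> M"
  shows "M $1$1 = psi q 1 0 (\<nu>\<^sup>2) l" "M $2$1 = dpsi q 1 0 (\<nu>\<^sup>2) l"
    "M $1$2 = psi q 0 1 (\<nu>\<^sup>2) l" "M $2$2 = dpsi q 0 1 (\<nu>\<^sup>2) l"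
proof -
  have "vec2 (psi q a b (\<nu>\<^sup>2) l) (dpsi q a b (\<nu>\<^sup>2) l) = M *v vec2 a b" for a b
    using M psi_is_solution[OF q_eq] unfolding is_transfer_matrix_def by (metis psi_at_0 dpsi_at_0)
  from this[of 1 0] this[of 0 1]
  show "M $1$1 = psi q 1 0 (\<nu>\<^sup>2) l" "M $2$1 = dpsi q 1 0 (\<nu>\<^sup>2) l"
    "M $1$2 = psi q 0 1 (\<nu>\<^sup>2) l" "M $2$2 = dpsi q 0 1 (\<nu>\<^sup>2) l"
    by (simp_all add: vec_eq_iff forall_2 vec2_def matrix_vector_mult_def sum_2)
qed

lemma det_transfer_matrix:
  fixes M :: "real^2^2"
  assumes "\<And>t. q t = (n t)\<^sup>2" "is_transfer_matrix n l \<nu> M"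
  shows "det M = 1"
  using psi_wronskian[of "\<nu>\<^sup>2"] transfer_matrix_entries[OF assms] by (simp add: det_2)

lemma transfer_matrix_entire_extension:
  fixes M :: "real \<Rightarrow> real^2^2"
  assumes "\<And>t. q t = (n t)\<^sup>2" "\<And>\<nu>. is_transfer_matrix n l \<nu> (M \<nu>)"
  obtains E :: "complex \<Rightarrow> complex^2^2"
  where "\<And>i j. (\<lambda>z. E z $ i $ j) holomorphic_on UNIV"
    and "\<And>\<nu>. E (of_real (\<nu>\<^sup>2)) = cmat (M \<nu>)"
proof
  define E :: "complex \<Rightarrow> complex^2^2" where
    "E z = (\<chi> i j. if i = 1 then (if j = 1 then psi_entire q 1 0 l z else psi_entire q 0 1 l z)
                   else (if j = 1 then dpsi_entire q 1 0 l z else dpsi_entire q 0 1 l z))" for z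
  show "(\<lambda>z. E z $ i $ j) holomorphic_on UNIV" for i j
    by (cases "i = 1"; cases "j = 1") (simp_all add: E_def psi_entire_holomorphic)
  show "E (of_real (\<nu>\<^sup>2)) = cmat (M \<nu>)" for \<nu>
    using transfer_matrix_entries[OF assms(1) assms(2)[of \<nu>]]
    by (simp add: E_def cmat_def vec_eq_iff forall_2 psi_entire_of_real del: of_real_power)
qed

end

section \<open>Analytic normal form at a band edge\<close>

lemma trace_2: "trace (A :: 'a::semiring_1^2^2) = A$1$1 + A$2$2"
  by (simp add: trace_def sum_2)

lemma trace_cmat: "trace (cmat A) = of_real (trace A)"
  by (simp add: trace_2 cmat_def)

lemma sinc_sums: "(\<lambda>k. of_real (sin_coeff (k + 1)) * w ^ k) sums sinc w"
proof (cases "w = 0")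
  case True
  then have "(\<lambda>k. complex_of_real (sin_coeff (k + 1)) * w ^ k) = (\<lambda>k. if k = 0 then 1 else 0)"
    by (auto simp: fun_eq_iff sin_coeff_def)
  then show ?thesis using True sums_single[of 0 "\<lambda>_. 1::complex"] by (simp add: sinc_def)
next
  case False
  then show ?thesis using sin_z_over_z_series'[OF False] by (simp add: sinc_def scaleR_conv_of_real)
qed

lemma sinc_holomorphic: "sinc holomorphic_on UNIV"
  by (rule power_series_entire[OF sinc_sums])

lemma sin_power2_eq_sinc: "sin w ^ 2 = sinc w * (w * sin w)"
  by (cases "w = 0") (simp_all add: sinc_def power2_eq_square)

text \<open>The columns of \<open>conjugator X x y w\<close> are \<open>(X - cos w) v\<close> and \<open>sinc w \<cdot> v\<close> for \<open>v = (x, y)\<close>.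
  If \<open>tr X = 2 cos w\<close> and \<open>det X = 1\<close>, then \<open>(X - cos w)\<^sup>2 = - sin\<^sup>2 w\<close> by Cayley--Hamilton, and
  \<open>normal_form w\<close> is the matrix of \<open>X\<close> in this basis; \<open>sinc\<close> keeps it analytic through \<open>w = 0\<close>.\<close>

definition conjugator :: "complex^2^2 \<Rightarrow> complex \<Rightarrow> complex \<Rightarrow> complex \<Rightarrow> complex^2^2" where
  "conjugator X x y w =
     (\<chi> i j. if i = 1 then (if j = 1 then (X$1$1 - cos w) * x + X$1$2 * y else sinc w * x)
            else (if j = 1 then X$2$1 * x + (X$2$2 - cos w) * y else sinc w * y))"

lemma det_conjugator:
  "det (conjugator X x y w) = sinc w * (X$1$2 * y\<^sup>2 - X$2$1 * x\<^sup>2 + (X$1$1 - X$2$2) * x * y)"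
  by (simp add: det_2 conjugator_def algebra_simps power2_eq_square)

lemma conjugator_conjugates_to_normal_form:
  fixes X :: "complex^2^2"
  assumes tr: "trace X = 2 * cos w" and dt: "det X = 1" and nonsingular: "det (conjugator X x y w) \<noteq> 0"
  shows "matrix_inv (conjugator X x y w) ** X ** conjugator X x y w = normal_form w"
proof -
  let ?D = "conjugator X x y w"
  have "invertible ?D" using nonsingular by (simp add: invertible_det_nz)
  then have inv: "matrix_inv ?D ** ?D = mat 1"
    unfolding invertible_def matrix_inv_def by (rule someI_ex[THEN conjunct2])
  have tr': "X$1$1 + X$2$2 = 2 * cos w" and dt': "X$1$1 * X$2$2 - X$1$2 * X$2$1 = 1"
    using tr dt by (simp_all add: trace_2 det_2)
  have "sin w ^ 2 + cos w ^ 2 = 1" "sin w ^ 2 = sinc w * (w * sin w)"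
    by (rule sin_cos_squared_add, rule sin_power2_eq_sinc)
  then have "X ** ?D = ?D ** normal_form w"
    using tr' dt'
    unfolding vec_eq_iff forall_2 matrix_matrix_mult_def sum_2 conjugator_def normal_form_def
    by simp algebra
  then have "matrix_inv ?D ** X ** ?D = matrix_inv ?D ** (?D ** normal_form w)"
    by (simp add: matrix_mul_assoc[symmetric])
  also have "\<dots> = normal_form w"
    by (simp add: matrix_mul_assoc inv)
  finally show ?thesis .
qed

lemma sl2_trace_2_not_identity:
  fixes X :: "real^2^2"
  assumes "trace X = 2" "det X = 1" "X \<noteq> mat 1"
  shows "X$1$2 \<noteq> 0 \<or> X$2$1 \<noteq> 0"
proof (rule ccontr)
  assume "\<not> (X$1$2 \<noteq> 0 \<or> X$2$1 \<noteq> 0)"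
  then have "X$1$2 = 0" "X$2$1 = 0" by auto
  moreover have "X$1$1 + X$2$2 = 2" "X$1$1 * X$2$2 = 1"
    using assms calculation by (simp_all add: trace_2 det_2)
  moreover have "(X$1$1 - 1)\<^sup>2 = X$1$1 * (X$1$1 + X$2$2 - 2) - (X$1$1 * X$2$2 - 1)"
    by (simp add: power2_eq_square algebra_simps)
  ultimately have "X = mat 1"
    by (simp add: vec_eq_iff forall_2 mat_def)
  then show False using assms(3) by simp
qed

lemma sl2_trace_has_derivative_0_at_identity:
  fixes A :: "real \<Rightarrow> complex^2^2"
  assumes deriv: "\<And>i j. ((\<lambda>\<nu>. A \<nu> $ i $ j) has_vector_derivative A' $ i $ j) (at \<nu>0)"
    and det: "\<And>\<nu>. det (A \<nu>) = 1" and identity: "A \<nu>0 = mat 1"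
  shows "((\<lambda>\<nu>. trace (A \<nu>)) has_vector_derivative 0) (at \<nu>0)"
proof -
  have "trace (A \<nu>) = 2 + A \<nu> $1$2 * A \<nu> $2$1 - (A \<nu> $1$1 - 1) * (A \<nu> $2$2 - 1)" for \<nu>
    using det[of \<nu>] by (simp add: trace_2 det_2 algebra_simps)
  then have trace_eq: "(\<lambda>\<nu>. trace (A \<nu>)) = (\<lambda>\<nu>. 2 + A \<nu> $1$2 * A \<nu> $2$1 - (A \<nu> $1$1 - 1) * (A \<nu> $2$2 - 1))"
    by (rule ext)
  have "A \<nu>0 $1$2 = 0" "A \<nu>0 $2$1 = 0" "A \<nu>0 $1$1 = 1" "A \<nu>0 $2$2 = 1"
    using identity by (simp_all add: mat_def)
  then have "0 + (A \<nu>0 $1$2 * A' $2$1 + A' $1$2 * A \<nu>0 $2$1)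
        - ((A \<nu>0 $1$1 - 1) * (A' $2$2 - 0) + (A' $1$1 - 0) * (A \<nu>0 $2$2 - 1)) = 0"
    by simp
  moreover have "((\<lambda>\<nu>. 2 + A \<nu> $1$2 * A \<nu> $2$1 - (A \<nu> $1$1 - 1) * (A \<nu> $2$2 - 1)) has_vector_derivative
      0 + (A \<nu>0 $1$2 * A' $2$1 + A' $1$2 * A \<nu>0 $2$1)
        - ((A \<nu>0 $1$1 - 1) * (A' $2$2 - 0) + (A' $1$1 - 0) * (A \<nu>0 $2$2 - 1))) (at \<nu>0)"
    by (intro has_vector_derivative_diff has_vector_derivative_add has_vector_derivative_mult
        has_vector_derivative_const deriv)
  ultimately show ?thesis unfolding trace_eq by (simp only:)
qed

lemma has_vector_derivative_of_real_square_comp: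
  assumes "f holomorphic_on UNIV"
  shows "((\<lambda>\<nu>. f (of_real (\<nu>\<^sup>2))) has_vector_derivative of_real (2 * \<nu>0) * deriv f (of_real (\<nu>0\<^sup>2))) (at \<nu>0)"
proof -
  have "((\<lambda>\<nu>. complex_of_real (\<nu>\<^sup>2)) has_vector_derivative of_real (2 * \<nu>0)) (at \<nu>0)"
    by (rule has_vector_derivative_of_real) (auto intro!: derivative_eq_intros)
  moreover have "(f has_field_derivative deriv f (of_real (\<nu>0\<^sup>2))) (at (of_real (\<nu>0\<^sup>2)))"
    using holomorphic_derivI[OF assms open_UNIV] by simp
  ultimately show ?thesis
    using field_vector_diff_chain_at by (simp add: o_def)
qed

lemma holomorphic_local_solution:
  assumes \<tau>: "\<tau> holomorphic_on UNIV" and deriv: "deriv \<tau> z0 \<noteq> 0"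
    and \<phi>: "\<phi> holomorphic_on UNIV" and \<phi>0: "\<phi> 0 = \<tau> z0"
  obtains G r S where "0 < r" "open S" "z0 \<in> S" "G holomorphic_on ball 0 r" "G 0 = z0"
    "\<And>w. w \<in> ball 0 r \<Longrightarrow> \<tau> (G w) = \<phi> w"
    "\<And>z w. z \<in> S \<Longrightarrow> w \<in> ball 0 r \<Longrightarrow> \<tau> z = \<phi> w \<Longrightarrow> G w = z"
proof -
  obtain r1 where "r1 > 0" and inj: "inj_on \<tau> (ball z0 r1)"
    using has_complex_derivative_locally_injective[OF \<tau> _ open_UNIV deriv] by blast
  define S where "S = ball z0 r1"
  have \<tau>S: "\<tau> holomorphic_on S" using \<tau> by (rule holomorphic_on_subset) auto
  have "open S" and inj: "inj_on \<tau> S" using inj by (simp_all add: S_def)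
  obtain g where g: "g holomorphic_on \<tau> ` S" and g_inv: "\<And>z. z \<in> S \<Longrightarrow> g (\<tau> z) = z"
    using holomorphic_has_inverse[OF \<tau>S \<open>open S\<close> inj] by metis
  have "open (\<tau> ` S)"
    using open_mapping_thm3[OF \<tau>S \<open>open S\<close> inj] .
  moreover have "z0 \<in> S" using \<open>r1 > 0\<close> by (simp add: S_def)
  moreover have "continuous (at 0) \<phi>"
    using holomorphic_on_imp_continuous_on[OF \<phi>] continuous_on_eq_continuous_at[OF open_UNIV] by blast
  moreover have "\<phi> 0 \<in> \<tau> ` S" using \<phi>0 \<open>z0 \<in> S\<close> by simp
  ultimately obtain e where "e > 0" "ball (\<phi> 0) e \<subseteq> \<tau> ` S"
    by (meson open_contains_ball)
  moreover obtain r where "r > 0" "\<And>w. dist w 0 < r \<Longrightarrow> dist (\<phi> w) (\<phi> 0) < e"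
    using \<open>continuous (at 0) \<phi>\<close> \<open>e > 0\<close> unfolding continuous_at_eps_delta by blast
  ultimately obtain r where r: "r > 0" "\<And>w. w \<in> ball 0 r \<Longrightarrow> \<phi> w \<in> \<tau> ` S"
    by (metis dist_commute mem_ball subsetD)
  define G where "G w = g (\<phi> w)" for w
  show thesis
  proof (rule that[of r S G])
    show "G holomorphic_on ball 0 r"
      unfolding G_def[abs_def] using r(2)
      by (intro holomorphic_on_compose_gen[OF holomorphic_on_subset[OF \<phi>] g, unfolded o_def]) auto
    show "\<tau> (G w) = \<phi> w" if "w \<in> ball 0 r" for w
      using r(2)[OF that] g_inv by (auto simp: G_def)
    show "G w = z" if "z \<in> S" "\<tau> z = \<phi> w" for z w
      using g_inv[OF that(1)] that(2) by (simp add: G_def)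
    show "G 0 = z0" using g_inv[OF \<open>z0 \<in> S\<close>] \<phi>0 by (simp add: G_def)
  qed (use r \<open>z0 \<in> S\<close> \<open>open S\<close> in auto)
qed

lemma det_cmat: "det (cmat A) = of_real (det A)"
  by (simp add: det_2 cmat_def)

lemma analytic_conjugator_family:
  fixes F :: "complex \<Rightarrow> complex^2^2"
  assumes holo: "\<And>i j. (\<lambda>w. F w $ i $ j) holomorphic_on ball 0 r" and "0 < r"
    and off_diagonal: "F 0 $1$2 \<noteq> 0 \<or> F 0 $2$1 \<noteq> 0"
  obtains x y s where "0 < s" "s \<le> r"
    "\<And>i j. (\<lambda>w. conjugator (F w) x y w $ i $ j) analytic_on ball 0 s"
    "\<And>w. w \<in> ball 0 s \<Longrightarrow> det (conjugator (F w) x y w) \<noteq> 0"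
proof -
  obtain x y :: complex where xy: "F 0 $1$2 * y\<^sup>2 - F 0 $2$1 * x\<^sup>2 + (F 0 $1$1 - F 0 $2$2) * x * y \<noteq> 0"
  proof (cases "F 0 $1$2 = 0")
    case True
    then show ?thesis using off_diagonal by (intro that[where x = 1 and y = 0]) simp
  next
    case False
    then show ?thesis by (intro that[where x = 0 and y = 1]) simp
  qed
  define h where "h w = det (conjugator (F w) x y w)" for w
  have entries: "(\<lambda>w. conjugator (F w) x y w $ i $ j) holomorphic_on ball 0 r" for i j
    using holo holomorphic_on_subset[OF sinc_holomorphic]
    by (cases "i = 1"; cases "j = 1") (auto simp: conjugator_def intro!: holomorphic_intros)
  have "h holomorphic_on ball 0 r"
    unfolding h_def[abs_def] det_conjugator
    using holo holomorphic_on_subset[OF sinc_holomorphic] by (intro holomorphic_intros) auto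
  then have "\<forall>w\<in>ball 0 r. isCont h w"
    using holomorphic_on_imp_continuous_on continuous_on_eq_continuous_at[OF open_ball] by blast
  then have "continuous (at 0) h" using \<open>0 < r\<close> by simp
  moreover have "h 0 \<noteq> 0"
    using xy by (simp add: h_def det_conjugator sinc_def)
  ultimately obtain s' where "s' > 0" and close: "\<And>w. dist w 0 < s' \<Longrightarrow> dist (h w) (h 0) < norm (h 0)"
    unfolding continuous_at_eps_delta by (meson zero_less_norm_iff)
  have s': "h w \<noteq> 0" if "dist w 0 < s'" for w
    using close[OF that] by (auto simp: dist_norm)
  show thesis
  proof (rule that[of "min r s'"])
    show "(\<lambda>w. conjugator (F w) x y w $ i $ j) analytic_on ball 0 (min r s')" for i j
      using holomorphic_on_subset[OF entries, of "ball 0 (min r s')" i j] by (simp add: analytic_on_open subset_ball)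
    show "det (conjugator (F w) x y w) \<noteq> 0" if "w \<in> ball 0 (min r s')" for w
      using s'[of w] that by (simp add: h_def dist_commute)
  qed (use \<open>0 < r\<close> \<open>s' > 0\<close> in auto)
qed

lemma band_edge_trace_deriv_nonzero:
  fixes M :: "real \<Rightarrow> real^2^2" and E :: "complex \<Rightarrow> complex^2^2"
  assumes E_holo: "\<And>i j. (\<lambda>z. E z $ i $ j) holomorphic_on UNIV"
    and E_M: "\<And>\<nu>. E (of_real (\<nu>\<^sup>2)) = cmat (M \<nu>)"
    and edge: "nondegenerate_band_edge M \<nu>0"
  shows "deriv (\<lambda>z. trace (E z)) (of_real (\<nu>0\<^sup>2)) \<noteq> 0"
proof
  assume deriv0: "deriv (\<lambda>z. trace (E z)) (of_real (\<nu>0\<^sup>2)) = 0"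
  obtain d where d: "((\<lambda>\<nu>. trace (M \<nu>)) has_real_derivative d) (at \<nu>0)" "d \<noteq> 0"
    using edge unfolding nondegenerate_band_edge_def by blast
  have "(\<lambda>z. trace (E z)) holomorphic_on UNIV"
    unfolding trace_2 using E_holo by (intro holomorphic_intros)
  from has_vector_derivative_of_real_square_comp[OF this, of \<nu>0]
  have "((\<lambda>\<nu>. complex_of_real (trace (M \<nu>))) has_vector_derivative 0) (at \<nu>0)"
    unfolding E_M trace_cmat deriv0 by simp
  moreover have "((\<lambda>\<nu>. complex_of_real (trace (M \<nu>))) has_vector_derivative complex_of_real d) (at \<nu>0)"
    by (rule has_vector_derivative_of_real[OF d(1)])
  ultimately have "0 = complex_of_real d"
    by (rule vector_derivative_unique_at)
  then show False using d(2) by simp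
qed

lemma band_edge_not_identity:
  fixes M :: "real \<Rightarrow> real^2^2" and E :: "complex \<Rightarrow> complex^2^2"
  assumes E_holo: "\<And>i j. (\<lambda>z. E z $ i $ j) holomorphic_on UNIV"
    and E_M: "\<And>\<nu>. E (of_real (\<nu>\<^sup>2)) = cmat (M \<nu>)"
    and det_M: "\<And>\<nu>. det (M \<nu>) = 1"
    and edge: "nondegenerate_band_edge M \<nu>0"
  shows "M \<nu>0 \<noteq> mat 1"
proof
  assume identity: "M \<nu>0 = mat 1"
  obtain d where d: "((\<lambda>\<nu>. trace (M \<nu>)) has_real_derivative d) (at \<nu>0)" "d \<noteq> 0"
    using edge unfolding nondegenerate_band_edge_def by blast
  define A' :: "complex^2^2" where
    "A' = (\<chi> i j. of_real (2 * \<nu>0) * deriv (\<lambda>z. E z $ i $ j) (of_real (\<nu>0\<^sup>2)))"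
  have "((\<lambda>\<nu>. cmat (M \<nu>) $ i $ j) has_vector_derivative A' $ i $ j) (at \<nu>0)" for i j
    using has_vector_derivative_of_real_square_comp[OF E_holo, of i j \<nu>0]
    unfolding E_M A'_def by simp
  moreover have "cmat (M \<nu>0) = mat 1"
    unfolding identity by (simp add: cmat_def mat_def vec_eq_iff)
  ultimately have "((\<lambda>\<nu>. trace (cmat (M \<nu>))) has_vector_derivative 0) (at \<nu>0)"
    using det_M by (intro sl2_trace_has_derivative_0_at_identity) (auto simp: det_cmat)
  moreover have "((\<lambda>\<nu>. trace (cmat (M \<nu>))) has_vector_derivative complex_of_real d) (at \<nu>0)"
    unfolding trace_cmat by (rule has_vector_derivative_of_real[OF d(1)])
  ultimately have "0 = complex_of_real d"
    by (rule vector_derivative_unique_at)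
  then show False using d(2) by simp
qed

lemma eventually_nhds_mem_if_continuous:
  assumes "continuous (at x) f" "open T" "f x \<in> T"
  shows "\<forall>\<^sub>F y in nhds x. f y \<in> T"
proof -
  obtain S where "open S" "x \<in> S" "\<forall>x'\<in>S. f x' \<in> T"
    using assms continuous_at_open by metis
  then show ?thesis unfolding eventually_nhds by blast
qed

lemma analytic_normal_form_at_band_edge:
  fixes M :: "real \<Rightarrow> real^2^2" and E :: "complex \<Rightarrow> complex^2^2" and \<omega> :: "real \<Rightarrow> complex"
  assumes E_holo: "\<And>i j. (\<lambda>z. E z $ i $ j) holomorphic_on UNIV"
    and E_M: "\<And>\<nu>. E (of_real (\<nu>\<^sup>2)) = cmat (M \<nu>)"
    and det_M: "\<And>\<nu>. det (M \<nu>) = 1"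
    and edge: "nondegenerate_band_edge M \<nu>0"
    and \<omega>_cont: "continuous (at \<nu>0) \<omega>" and \<omega>_edge: "\<omega> \<nu>0 = 0"
    and \<omega>_cos: "\<forall>\<^sub>F \<nu> in nhds \<nu>0. cos (\<omega> \<nu>) = complex_of_real (trace (M \<nu>)) / 2"
  shows "\<exists>D :: complex \<Rightarrow> complex^2^2. \<exists>r>0.
           (\<forall>i j. (\<lambda>w. D w $ i $ j) analytic_on ball 0 r) \<and>
           (\<forall>w\<in>ball 0 r. det (D w) \<noteq> 0) \<and>
           (\<forall>\<^sub>F \<nu> in nhds \<nu>0. \<omega> \<nu> \<in> ball 0 r \<and>
              matrix_inv (D (\<omega> \<nu>)) ** cmat (M \<nu>) ** D (\<omega> \<nu>) = normal_form (\<omega> \<nu>))"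
proof -
  have trace_E: "trace (E (of_real (\<nu>\<^sup>2))) = of_real (trace (M \<nu>))" for \<nu>
    by (simp add: E_M trace_cmat del: of_real_power)
  have "complex_of_real (trace (M \<nu>0)) = complex_of_real 2"
    using eventually_nhds_x_imp_x[OF \<omega>_cos] \<omega>_edge by simp
  then have "trace (M \<nu>0) = 2" by (simp only: of_real_eq_iff)
  have "(\<lambda>z. trace (E z)) holomorphic_on UNIV"
    unfolding trace_2 using E_holo by (intro holomorphic_intros)
  moreover have "(\<lambda>w. 2 * cos w) holomorphic_on UNIV" by (intro holomorphic_intros)
  moreover have "2 * cos 0 = trace (E (of_real (\<nu>0\<^sup>2)))"
    using trace_E[of \<nu>0] \<open>trace (M \<nu>0) = 2\<close> by simp
  ultimately obtain r S G where "0 < r" "open S" "of_real (\<nu>0\<^sup>2) \<in> S" and G: "G holomorphic_on ball 0 r"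
      "G 0 = of_real (\<nu>0\<^sup>2)" "\<And>w. w \<in> ball 0 r \<Longrightarrow> trace (E (G w)) = 2 * cos w"
    and G_unique: "\<And>z w. z \<in> S \<Longrightarrow> w \<in> ball 0 r \<Longrightarrow> trace (E z) = 2 * cos w \<Longrightarrow> G w = z"
    by (rule holomorphic_local_solution[OF _ band_edge_trace_deriv_nonzero[OF E_holo E_M edge]]) blast+
  define F where "F w = E (G w)" for w
  have F_holo: "(\<lambda>w. F w $ i $ j) holomorphic_on ball 0 r" for i j
    unfolding F_def using holomorphic_on_compose[OF G(1) holomorphic_on_subset[OF E_holo]]
    by (simp add: o_def)
  have "M \<nu>0 $1$2 \<noteq> 0 \<or> M \<nu>0 $2$1 \<noteq> 0"
    using sl2_trace_2_not_identity[OF \<open>trace (M \<nu>0) = 2\<close> det_M] band_edge_not_identity[OF E_holo E_M det_M edge]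
    by blast
  then have "F 0 $1$2 \<noteq> 0 \<or> F 0 $2$1 \<noteq> 0"
    by (simp add: F_def G(2) E_M cmat_def del: of_real_power)
  then obtain x y s where "0 < s" "s \<le> r"
    and D_analytic: "\<And>i j. (\<lambda>w. conjugator (F w) x y w $ i $ j) analytic_on ball 0 s"
    and D_det: "\<And>w. w \<in> ball 0 s \<Longrightarrow> det (conjugator (F w) x y w) \<noteq> 0"
    by (rule analytic_conjugator_family[OF F_holo \<open>0 < r\<close>]) blast+
  have "\<forall>\<^sub>F \<nu> in nhds \<nu>0. \<omega> \<nu> \<in> ball 0 s"
    using \<omega>_cont \<omega>_edge \<open>0 < s\<close> by (intro eventually_nhds_mem_if_continuous) auto
  moreover have "\<forall>\<^sub>F \<nu> in nhds \<nu>0. of_real (\<nu>\<^sup>2) \<in> S"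
    using \<open>open S\<close> \<open>of_real (\<nu>0\<^sup>2) \<in> S\<close>
    by (intro eventually_nhds_mem_if_continuous[where f = "\<lambda>\<nu>. of_real (\<nu>\<^sup>2)"]) (auto intro!: continuous_intros)
  ultimately have "\<forall>\<^sub>F \<nu> in nhds \<nu>0. \<omega> \<nu> \<in> ball 0 s \<and>
      matrix_inv (conjugator (F (\<omega> \<nu>)) x y (\<omega> \<nu>)) ** cmat (M \<nu>) ** conjugator (F (\<omega> \<nu>)) x y (\<omega> \<nu>)
        = normal_form (\<omega> \<nu>)"
    using \<omega>_cos
  proof eventually_elim
    case (elim \<nu>)
    then have trace_cos: "trace (cmat (M \<nu>)) = 2 * cos (\<omega> \<nu>)" by (simp add: trace_cmat mult.commute)
    have "\<omega> \<nu> \<in> ball 0 r" using elim(1) \<open>s \<le> r\<close> by auto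
    from G_unique[OF elim(2) this] have "G (\<omega> \<nu>) = of_real (\<nu>\<^sup>2)"
      using trace_cos by (simp add: E_M del: of_real_power)
    then have "F (\<omega> \<nu>) = cmat (M \<nu>)" by (simp add: F_def E_M del: of_real_power)
    moreover have "det (cmat (M \<nu>)) = 1" by (simp add: det_cmat det_M)
    ultimately show ?case
      using conjugator_conjugates_to_normal_form[OF trace_cos] D_det[OF elim(1)] elim(1) by simp
  qed
  then show ?thesis
    using \<open>0 < s\<close> D_analytic D_det by (intro exI[of _ "\<lambda>w. conjugator (F w) x y w"] exI[of _ s]) auto
qed

theorem proposition1:
  fixes n :: "real \<Rightarrow> real" and l :: real
    and M :: "real \<Rightarrow> real^2^2" and \<nu>0 :: real and \<omega> :: "real \<Rightarrow> complex"
  assumes l_pos: "l > 0"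
    and n_pos: "\<And>x. n x > 0"
    and n_periodic: "\<And>x. n (x + l) = n x"
    and n_integrable: "(\<lambda>x. (n x)\<^sup>2) integrable_on {0..l}"
    and M_transfer: "\<And>\<nu>. is_transfer_matrix n l \<nu> (M \<nu>)"
    and edge: "nondegenerate_band_edge M \<nu>0"
    and \<omega>_cont: "continuous (at \<nu>0) \<omega>"
    and \<omega>_edge: "\<omega> \<nu>0 = 0"
    and \<omega>_cos: "\<forall>\<^sub>F \<nu> in nhds \<nu>0. cos (\<omega> \<nu>) = complex_of_real (trace (M \<nu>)) / 2"
  shows "\<exists>D :: complex \<Rightarrow> complex^2^2. \<exists>r>0.
           (\<forall>i j. (\<lambda>w. D w $ i $ j) analytic_on ball 0 r) \<and>
           (\<forall>w\<in>ball 0 r. det (D w) \<noteq> 0) \<and>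
           (\<forall>\<^sub>F \<nu> in nhds \<nu>0. \<omega> \<nu> \<in> ball 0 r \<and>
              matrix_inv (D (\<omega> \<nu>)) ** cmat (M \<nu>) ** D (\<omega> \<nu>) = normal_form (\<omega> \<nu>))"
proof -
  interpret hill_equation "\<lambda>x. (n x)\<^sup>2" l
    using l_pos n_integrable by unfold_locales simp_all
  obtain E where "\<And>i j. (\<lambda>z. E z $ i $ j) holomorphic_on UNIV" "\<And>\<nu>. E (of_real (\<nu>\<^sup>2)) = cmat (M \<nu>)"
    using transfer_matrix_entire_extension[OF _ M_transfer] by blast
  moreover have "det (M \<nu>) = 1" for \<nu>
    by (rule det_transfer_matrix[OF _ M_transfer]) simp
  ultimately show ?thesis
    by (rule analytic_normal_form_at_band_edge[OF _ _ _ edge \<omega>_cont \<omega>_edge \<omega>_cos])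
qed

end
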